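(* Let $\beta\in(1,2]$ and let $\mu$ be a real-valued function in $C^\infty(\mathbb{R}^n\setminus\{0\})$, homogeneous of degree $\beta$ (i.e. $\mu(\lambda\xi)=\lambda^\beta\mu(\xi)$ for $\lambda>0$, $\xi\ne0$), with $\mu(\xi)\neq0$ for all $\xi\ne0$. Then: (i) for all $0<p,q\le\infty$ there is $\epsilon>0$ such that $(1-\rho_0)\partial^\gamma\mu\in W^{\infty,\infty}_{n/(\dot p\wedge\dot q)+\epsilon}$ for all $|\gamma|=2$, where $\rho_0\in C_c^\infty$ is supported in $B(0,1/2)$ and equals $1$ on $B(0,1/4)$; and (ii) there exists $\kappa_0\in\mathbb S^{n-1}$ at which the Hessian matrix of $\mu$ is nondegenerate (in fact definite). Consequently $\mu$ satisfies all hypotheses of Theorem 1.5 (the necessity result stated there).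
   Context: For a fixed nonzero Schwartz window $\phi$, $V_\phi f(x,\xi)=\int f(y)\overline{\phi(y-x)}e^{-2\pi i y\cdot\xi}dy$; $\langle x\rangle=(1+|x|^2)^{1/2}$. The Wiener amalgam space $W^{p,q}_s$ consists of $f\in\mathcal S'$ with $\|f\|_{W^{p,q}_s}=\big\|\,\|V_\phi f(x,\xi)\langle\xi\rangle^s\|_{L^q_\xi}\big\|_{L^p_x}<\infty$. $\dot p=\min\{1,p\}$, $\dot q=\min\{1,q\}$, $\dot p\wedge\dot q=\min\{\dot p,\dot q\}$. The hypotheses of Theorem 1.5 are: $\mu$ real-valued $C^2(\mathbb{R}^n\setminus\{0\})$, $(1-\rho_0)\partial^\gamma\mu\in W^{\infty,\infty}_{n/(\dot p\wedge\dot q)+\epsilon}$ ($|\gamma|=2$), nonzero Hessian determinant at some $\kappa_0\in\mathbb S^{n-1}$, and $\mu(\lambda\xi)=\lambda^\beta\mu(\xi)$ for $\lambda\ge1$, $\xi\in B(\kappa_0,r_0)\cap\mathbb S^{n-1}$. *)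

theory Defs
  imports "HOL-Analysis.Analysis"
begin

text \<open>Partial derivative in coordinate direction i, and iterated partial derivatives.
  The list [i1,...,ik] denotes the operator d_i1 d_i2 ... d_ik.\<close>
definition dpart :: "'n::finite \<Rightarrow> (real^'n \<Rightarrow> 'a::real_normed_vector) \<Rightarrow> real^'n \<Rightarrow> 'a" where
  "dpart i f x = frechet_derivative f (at x) (axis i 1)"

fun dlist :: "'n::finite list \<Rightarrow> (real^'n \<Rightarrow> 'a::real_normed_vector) \<Rightarrow> real^'n \<Rightarrow> 'a" where
  "dlist [] f = f"
| "dlist (i # is) f = dpart i (dlist is f)"

definition smooth_on :: "(real^'n::finite) set \<Rightarrow> (real^'n \<Rightarrow> 'a::real_normed_vector) \<Rightarrow> bool" where
  "smooth_on U f \<longleftrightarrow> (\<forall>is. \<forall>x\<in>U. dlist is f differentiable (at x))"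

definition schwartz :: "(real^'n::finite \<Rightarrow> complex) \<Rightarrow> bool" where
  "schwartz \<phi> \<longleftrightarrow> smooth_on UNIV \<phi> \<and>
     (\<forall>is (k::nat). \<exists>C. \<forall>x. (1 + norm x) ^ k * norm (dlist is \<phi> x) \<le> C)"

definition jbr :: "real^'n::finite \<Rightarrow> real" where
  "jbr x = sqrt (1 + (norm x)\<^sup>2)"

definition STFT :: "(real^'n::finite \<Rightarrow> complex) \<Rightarrow> (real^'n \<Rightarrow> complex) \<Rightarrow> real^'n \<Rightarrow> real^'n \<Rightarrow> complex" where
  "STFT \<phi> f x \<xi> = (LINT y|lborel. f y * cnj (\<phi> (y - x)) * cis (- 2 * pi * (y \<bullet> \<xi>)))"

definition in_W_inf_inf :: "(real^'n::finite \<Rightarrow> complex) \<Rightarrow> real \<Rightarrow> (real^'n \<Rightarrow> complex) \<Rightarrow> bool" where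
  "in_W_inf_inf \<phi> s f \<longleftrightarrow>
     (\<forall>x \<xi>. integrable lborel (\<lambda>y. f y * cnj (\<phi> (y - x)) * cis (- 2 * pi * (y \<bullet> \<xi>)))) \<and>
     (\<exists>C. \<forall>x \<xi>. norm (STFT \<phi> f x \<xi>) * jbr \<xi> powr s \<le> C)"

text \<open>p-dot wedge q-dot = min{1,p,q} for p,q in (0,infty].\<close>
definition dotmin :: "ereal \<Rightarrow> ereal \<Rightarrow> real" where
  "dotmin p q = real_of_ereal (min 1 (min p q))"

definition hessian :: "(real^'n::finite \<Rightarrow> real) \<Rightarrow> real^'n \<Rightarrow> real^'n^'n" where
  "hessian \<mu> x = (\<chi> i j. dlist [i, j] \<mu> x)"

end

theory Submission
  imports Defs "HOL-Probability.Sinc_Integral"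
begin

text \<open>
  Part (i). For k \<ge> 2 the k-th derivatives of \<mu> are homogeneous of degree \<beta> - k \<le> 0, so
  f = (1 - \<rho>0) \<partial>_i \<partial>_j \<mu> is smooth with bounded derivatives of all orders. For a Schwartz
  window \<phi>, all derivatives of f conj(\<phi>(\<cdot> - x)) are then dominated by (1 + |\<cdot> - x|)^(-2n),
  uniformly in x. A difference with step h, |h| = 1/(2|\<xi>|), a half period of the character,
  doubles its Fourier integral at \<xi>, while an N-th difference is bounded by |h|^N times N-th
  derivatives. Hence V_\<phi> f(x,\<xi>) = O(|\<xi>|^(-N)) uniformly in x for every N, and f lies in
  W^{\<infinity>,\<infinity>}_s for every s.

  Part (ii). Let \<kappa> minimise |\<mu>| on the sphere, m = |\<mu> \<kappa>| > 0 and \<sigma> the sign of \<mu> \<kappa>. By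
  homogeneity \<sigma> \<mu> \<ge> m |\<cdot>|^\<beta> near \<kappa>, with equality at \<kappa>, so the second-derivative test along
  lines gives \<sigma> D^2\<mu>(\<kappa>) \<ge> m D^2|\<cdot>|^\<beta>(\<kappa>) = m \<beta> (I + (\<beta> - 2) \<kappa> \<kappa>^T), which is positive
  definite for \<beta> > 1.
\<close>

section \<open>Calculus of iterated partial derivatives\<close>

lemma frechet_derivative_cong_open:
  assumes "open U" "z \<in> U" "\<And>y. y \<in> U \<Longrightarrow> F y = G y"
  shows "frechet_derivative F (at z) = frechet_derivative G (at z)"
proof -
  have "(F has_derivative D) (at z) \<longleftrightarrow> (G has_derivative D) (at z)" for D
    using assms has_derivative_transform_within_open[of F D z UNIV U G]
      has_derivative_transform_within_open[of G D z UNIV U F] by auto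
  then show ?thesis unfolding frechet_derivative_def by simp
qed

lemma differentiable_at_cong_open:
  assumes "open U" "z \<in> U" "\<And>y. y \<in> U \<Longrightarrow> F y = G y" "G differentiable (at z)"
  shows "F differentiable (at z)"
  using assms has_derivative_transform_within_open[of G _ z UNIV U F]
  unfolding differentiable_def by fastforce

lemma dlist_cong_open:
  assumes "open U" "\<And>y. y \<in> U \<Longrightarrow> F y = G y" "z \<in> U"
  shows "dlist is F z = dlist is G z"
  using assms(3)
proof (induction "is" arbitrary: z)
  case Nil then show ?case using assms by simp
next
  case (Cons i "is")
  then show ?case unfolding dlist.simps dpart_def
    using frechet_derivative_cong_open[OF assms(1) Cons.prems, of "dlist is F" "dlist is G"] Cons.IH
    by simp
qed

lemma dlist_append: "dlist (a @ b) F = dlist a (dlist b F)"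
  by (induction a) auto

lemma smooth_on_cong_open:
  assumes "open U" "\<And>y. y \<in> U \<Longrightarrow> F y = G y" "smooth_on U G"
  shows "smooth_on U F"
  unfolding smooth_on_def
proof (intro allI ballI)
  fix "is" z assume z: "z \<in> U"
  show "dlist is F differentiable (at z)"
    by (rule differentiable_at_cong_open[OF assms(1) z, of _ "dlist is G"])
       (use dlist_cong_open[OF assms(1,2)] assms(3) z in \<open>auto simp: smooth_on_def\<close>)
qed

lemma smooth_on_dlist: "smooth_on U F \<Longrightarrow> smooth_on U (dlist is F)"
  unfolding smooth_on_def dlist_append[symmetric] by blast

lemma smooth_on_subset: "smooth_on U F \<Longrightarrow> V \<subseteq> U \<Longrightarrow> smooth_on V F"
  unfolding smooth_on_def by auto

lemma smooth_on_dlist_differentiable: "smooth_on U F \<Longrightarrow> z \<in> U \<Longrightarrow> dlist is F differentiable (at z)"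
  unfolding smooth_on_def by blast

lemma smooth_on_imp_differentiable: "smooth_on U F \<Longrightarrow> z \<in> U \<Longrightarrow> F differentiable (at z)"
  using smooth_on_dlist_differentiable[of U F z "[]"] by simp

lemma continuous_on_dlist:
  assumes "smooth_on U F" "open U"
  shows "continuous_on U (dlist is F)"
  using assms
  by (auto simp: smooth_on_def intro!: continuous_at_imp_continuous_on differentiable_imp_continuous_within)

lemma dpart_bounded_linear:
  fixes L :: "'a::real_normed_vector \<Rightarrow> 'b::real_normed_vector"
  assumes L: "bounded_linear L" and d: "F differentiable (at z)"
  shows "dpart i (\<lambda>y. L (F y)) z = L (dpart i F z)"
    and "(\<lambda>y. L (F y)) differentiable (at z)"
proof -
  have "((\<lambda>y. L (F y)) has_derivative (\<lambda>h. L (frechet_derivative F (at z) h))) (at z)"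
    using bounded_linear.has_derivative[OF L d[unfolded frechet_derivative_works]] .
  then show "dpart i (\<lambda>y. L (F y)) z = L (dpart i F z)" "(\<lambda>y. L (F y)) differentiable (at z)"
    unfolding dpart_def using frechet_derivative_at differentiableI by metis+
qed

lemma dlist_bounded_linear:
  fixes L :: "'a::real_normed_vector \<Rightarrow> 'b::real_normed_vector"
  assumes L: "bounded_linear L" and U: "open U" and sm: "smooth_on U F" and z: "z \<in> U"
  shows "dlist is (\<lambda>y. L (F y)) z = L (dlist is F z)"
  using z
proof (induction "is" arbitrary: z)
  case Nil then show ?case by simp
next
  case (Cons i "is")
  have "dlist (i # is) (\<lambda>y. L (F y)) z = dpart i (\<lambda>y. L (dlist is F y)) z"
    unfolding dlist.simps dpart_def using frechet_derivative_cong_open[OF U Cons.prems Cons.IH] by simp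
  also have "\<dots> = L (dlist (i # is) F z)"
    using dpart_bounded_linear(1)[OF L, of "dlist is F" z i] sm Cons.prems by (simp add: smooth_on_def)
  finally show ?case .
qed

lemma smooth_on_bounded_linear:
  fixes L :: "'a::real_normed_vector \<Rightarrow> 'b::real_normed_vector"
  assumes L: "bounded_linear L" and U: "open U" and sm: "smooth_on U F"
  shows "smooth_on U (\<lambda>y. L (F y))"
  unfolding smooth_on_def
proof (intro allI ballI)
  fix "is" z assume z: "z \<in> U"
  have d: "(\<lambda>y. L (dlist is F y)) differentiable (at z)"
    using dpart_bounded_linear(2)[OF L] sm z by (auto simp: smooth_on_def)
  show "dlist is (\<lambda>y. L (F y)) differentiable (at z)"
    by (rule differentiable_at_cong_open[OF U z _ d]) (rule dlist_bounded_linear[OF L U sm])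
qed

fun splits :: "'n list \<Rightarrow> ('n list \<times> 'n list) list" where
  "splits [] = [([],[])]"
| "splits (i # is) = map (\<lambda>(a,b). (i # a, b)) (splits is) @ map (\<lambda>(a,b). (a, i # b)) (splits is)"

lemma has_derivative_sum_list_mult:
  fixes F G :: "real^'n::finite \<Rightarrow> 'a::real_normed_algebra"
  assumes "\<And>a b. (a,b) \<in> set L \<Longrightarrow> dlist a F differentiable (at z) \<and> dlist b G differentiable (at z)"
  shows "((\<lambda>y. \<Sum>(a,b)\<leftarrow>L. dlist a F y * dlist b G y) has_derivative
     (\<lambda>v. \<Sum>(a,b)\<leftarrow>L. dlist a F z * frechet_derivative (dlist b G) (at z) v
                      + frechet_derivative (dlist a F) (at z) v * dlist b G z)) (at z)"
  using assms
proof (induction L)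
  case Nil then show ?case by simp
next
  case (Cons p L)
  obtain a b where p: "p = (a,b)" by force
  have "((\<lambda>y. dlist a F y * dlist b G y) has_derivative
     (\<lambda>v. dlist a F z * frechet_derivative (dlist b G) (at z) v
                      + frechet_derivative (dlist a F) (at z) v * dlist b G z)) (at z)"
    by (rule has_derivative_mult) (use Cons.prems p frechet_derivative_works in auto)
  moreover have "((\<lambda>y. \<Sum>(a,b)\<leftarrow>L. dlist a F y * dlist b G y) has_derivative
     (\<lambda>v. \<Sum>(a,b)\<leftarrow>L. dlist a F z * frechet_derivative (dlist b G) (at z) v
                      + frechet_derivative (dlist a F) (at z) v * dlist b G z)) (at z)"
    by (rule Cons.IH) (use Cons.prems in auto)
  ultimately show ?case using p by (simp add: has_derivative_add)
qed

lemma dlist_mult: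
  fixes F G :: "real^'n::finite \<Rightarrow> 'a::real_normed_algebra"
  assumes U: "open U" and sF: "smooth_on U F" and sG: "smooth_on U G" and z: "z \<in> U"
  shows "dlist is (\<lambda>y. F y * G y) z = (\<Sum>(a,b)\<leftarrow>splits is. dlist a F z * dlist b G z)"
  using z
proof (induction "is" arbitrary: z)
  case Nil then show ?case by simp
next
  case (Cons i "is")
  have "dlist (i # is) (\<lambda>y. F y * G y) z
      = frechet_derivative (\<lambda>y. \<Sum>(a,b)\<leftarrow>splits is. dlist a F y * dlist b G y) (at z) (axis i 1)"
    unfolding dlist.simps dpart_def using frechet_derivative_cong_open[OF U Cons.prems Cons.IH] by simp
  also have "\<dots> = (\<Sum>(a,b)\<leftarrow>splits is. dlist a F z * dlist (i # b) G z + dlist (i # a) F z * dlist b G z)"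
    by (subst frechet_derivative_at[OF has_derivative_sum_list_mult, symmetric])
       (use sF sG Cons.prems in \<open>auto simp: smooth_on_def dpart_def\<close>)
  also have "\<dots> = (\<Sum>(a,b)\<leftarrow>splits (i # is). dlist a F z * dlist b G z)"
    by (simp add: sum_list_addf case_prod_unfold o_def add.commute)
  finally show ?case .
qed

lemma norm_sum_list_le: "norm (\<Sum>q\<leftarrow>L. (h q :: 'a::real_normed_vector)) \<le> (\<Sum>q\<leftarrow>L. norm (h q))"
  by (induction L) (auto intro: order_trans[OF norm_triangle_ineq])

lemma norm_dlist_mult_le:
  fixes F G :: "real^'n::finite \<Rightarrow> 'a::real_normed_algebra"
  assumes U: "open U" and sF: "smooth_on U F" and sG: "smooth_on U G" and z: "z \<in> U"
    and A: "\<And>a. norm (dlist a F z) \<le> A a" and C: "\<And>b. norm (dlist b G z) \<le> C b"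
  shows "norm (dlist is (\<lambda>y. F y * G y) z) \<le> (\<Sum>(a,b)\<leftarrow>splits is. A a * C b)"
proof -
  have "norm (dlist is (\<lambda>y. F y * G y) z) \<le> (\<Sum>(a,b)\<leftarrow>splits is. norm (dlist a F z * dlist b G z))"
    using dlist_mult[OF U sF sG z, of "is"] norm_sum_list_le[of "\<lambda>(a,b). dlist a F z * dlist b G z"]
    by (simp add: case_prod_unfold)
  also have "\<dots> \<le> (\<Sum>(a,b)\<leftarrow>splits is. A a * C b)"
    unfolding case_prod_unfold using A C
    by (intro sum_list_mono order_trans[OF norm_mult_ineq] mult_mono)
       (auto intro: order_trans[OF norm_ge_zero])
  finally show ?thesis .
qed

lemma smooth_on_mult:
  fixes F G :: "real^'n::finite \<Rightarrow> 'a::real_normed_algebra"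
  assumes U: "open U" and sF: "smooth_on U F" and sG: "smooth_on U G"
  shows "smooth_on U (\<lambda>y. F y * G y)"
  unfolding smooth_on_def
proof (intro allI ballI)
  fix "is" z assume z: "z \<in> U"
  have d: "(\<lambda>y. \<Sum>(a,b)\<leftarrow>splits is. dlist a F y * dlist b G y) differentiable (at z)"
    using has_derivative_sum_list_mult[of "splits is" F z G] sF sG z
    by (auto simp: smooth_on_def differentiable_def)
  show "dlist is (\<lambda>y. F y * G y) differentiable (at z)"
    by (rule differentiable_at_cong_open[OF U z _ d]) (rule dlist_mult[OF U sF sG])
qed

lemma has_derivative_affine_comp:
  fixes F :: "real^'n::finite \<Rightarrow> 'a::real_normed_vector"
  assumes d: "F differentiable (at (c *\<^sub>R z + w))"
  shows "((\<lambda>y. s *\<^sub>R F (c *\<^sub>R y + w)) has_derivative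
          (\<lambda>h. s *\<^sub>R frechet_derivative F (at (c *\<^sub>R z + w)) (c *\<^sub>R h))) (at z)"
proof -
  have "((\<lambda>y. c *\<^sub>R y + w) has_derivative (\<lambda>h. c *\<^sub>R h)) (at z)"
    by (auto intro!: derivative_eq_intros)
  from has_derivative_compose[OF this d[unfolded frechet_derivative_works]]
  show ?thesis by (rule has_derivative_scaleR_right)
qed

lemma dlist_affine_comp:
  fixes F :: "real^'n::finite \<Rightarrow> 'a::real_normed_vector"
  assumes U: "open U" and V: "open V" and sm: "smooth_on U F"
    and AV: "\<And>y. y \<in> V \<Longrightarrow> c *\<^sub>R y + w \<in> U" and z: "z \<in> V"
  shows "dlist is (\<lambda>y. F (c *\<^sub>R y + w)) z = c ^ length is *\<^sub>R dlist is F (c *\<^sub>R z + w)"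
  using z
proof (induction "is" arbitrary: z)
  case Nil then show ?case by simp
next
  case (Cons i "is")
  have d: "dlist is F differentiable (at (c *\<^sub>R z + w))"
    using sm AV Cons.prems by (auto simp: smooth_on_def)
  have lin: "linear (frechet_derivative (dlist is F) (at (c *\<^sub>R z + w)))"
    using linear_frechet_derivative[OF d] .
  have "dlist (i # is) (\<lambda>y. F (c *\<^sub>R y + w)) z
      = frechet_derivative (\<lambda>y. c ^ length is *\<^sub>R dlist is F (c *\<^sub>R y + w)) (at z) (axis i 1)"
    unfolding dlist.simps dpart_def using frechet_derivative_cong_open[OF V Cons.prems Cons.IH] by simp
  also have "\<dots> = c ^ length is *\<^sub>R frechet_derivative (dlist is F) (at (c *\<^sub>R z + w)) (c *\<^sub>R axis i 1)"
    by (subst frechet_derivative_at[OF has_derivative_affine_comp[OF d], symmetric]) simp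
  also have "\<dots> = c ^ length (i # is) *\<^sub>R dlist (i # is) F (c *\<^sub>R z + w)"
    using linear.scaleR[OF lin] by (simp add: dpart_def mult.commute)
  finally show ?case .
qed

lemma smooth_on_affine_comp:
  fixes F :: "real^'n::finite \<Rightarrow> 'a::real_normed_vector"
  assumes U: "open U" and V: "open V" and sm: "smooth_on U F"
    and AV: "\<And>y. y \<in> V \<Longrightarrow> c *\<^sub>R y + w \<in> U"
  shows "smooth_on V (\<lambda>y. F (c *\<^sub>R y + w))"
  unfolding smooth_on_def
proof (intro allI ballI)
  fix "is" z assume z: "z \<in> V"
  have d: "(\<lambda>y. c ^ length is *\<^sub>R dlist is F (c *\<^sub>R y + w)) differentiable (at z)"
    using has_derivative_affine_comp[of "dlist is F" c z w "c ^ length is"] sm AV z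
    by (auto simp: smooth_on_def differentiable_def)
  show "dlist is (\<lambda>y. F (c *\<^sub>R y + w)) differentiable (at z)"
    by (rule differentiable_at_cong_open[OF V z _ d]) (rule dlist_affine_comp[OF U V sm AV])
qed

lemma dlist_translate:
  fixes F :: "real^'n::finite \<Rightarrow> 'a::real_normed_vector"
  assumes sm: "smooth_on UNIV F"
  shows "dlist is (\<lambda>y. F (y - x)) z = dlist is F (z - x)"
    and "smooth_on UNIV (\<lambda>y. F (y - x))"
  using dlist_affine_comp[OF open_UNIV open_UNIV sm, of 1 "-x" z "is"]
    smooth_on_affine_comp[OF open_UNIV open_UNIV sm, of 1 "-x"] by auto

lemma dlist_const: "dlist is (\<lambda>_::real^'n::finite. K) z = (if is = [] then K else (0::'a::real_normed_vector))"
proof (induction "is" arbitrary: z)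
  case Nil then show ?case by simp
next
  case (Cons i "is")
  then have "dlist is (\<lambda>_::real^'n. K) = (\<lambda>_. if is = [] then K else 0)" by auto
  then show ?case
    by (simp add: dpart_def frechet_derivative_at[OF has_derivative_const, symmetric])
qed

lemma smooth_on_const: "smooth_on U (\<lambda>_::real^'n::finite. (K::'a::real_normed_vector))"
  unfolding smooth_on_def dlist_const[abs_def] by simp

lemma dlist_const_diff:
  fixes G :: "real^'n::finite \<Rightarrow> 'a::real_normed_vector"
  assumes sm: "smooth_on UNIV G" and "is \<noteq> []"
  shows "dlist is (\<lambda>x. K - G x) = dlist is (\<lambda>x. - G x)"
  using assms(2)
proof (induction "is")
  case Nil then show ?case by simp
next
  case (Cons i "is")
  show ?case
  proof (cases "is = []")
    case True
    have "frechet_derivative (\<lambda>x. K - G x) (at z) = frechet_derivative (\<lambda>x. - G x) (at z)" for z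
    proof -
      have d: "(G has_derivative frechet_derivative G (at z)) (at z)"
        using smooth_on_imp_differentiable[OF sm] frechet_derivative_works by blast
      show ?thesis
        using frechet_derivative_at[OF has_derivative_diff[OF has_derivative_const[of K] d]]
          frechet_derivative_at[OF has_derivative_minus[OF d]] by simp
    qed
    then show ?thesis using True by (simp add: dpart_def fun_eq_iff)
  qed (use Cons.IH in simp)
qed

lemma smooth_on_const_diff:
  fixes G :: "real^'n::finite \<Rightarrow> 'a::real_normed_vector"
  assumes sm: "smooth_on UNIV G"
  shows "smooth_on UNIV (\<lambda>x. K - G x)"
  unfolding smooth_on_def
proof (intro allI ballI)
  fix "is" z
  have "smooth_on UNIV (\<lambda>x. - G x)"
    using smooth_on_bounded_linear[OF bounded_linear_minus[OF bounded_linear_ident] open_UNIV sm] by simp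
  then show "dlist is (\<lambda>x. K - G x) differentiable (at z)"
    using dlist_const_diff[OF sm] smooth_on_imp_differentiable[OF sm]
    by (cases "is = []") (auto simp: smooth_on_def intro!: derivative_intros)
qed

section \<open>Bounded derivatives of the cut-off second derivatives\<close>

definition bounded_derivatives :: "(real^'n::finite \<Rightarrow> 'a::real_normed_vector) \<Rightarrow> bool" where
  "bounded_derivatives f \<longleftrightarrow> (\<forall>is. \<exists>B. \<forall>z. norm (dlist is f z) \<le> B)"

lemma dlist_homogeneous:
  fixes \<mu> :: "real^'n::finite \<Rightarrow> real"
  assumes smooth: "smooth_on (- {0}) \<mu>"
    and homog: "\<And>t \<xi>. t > 0 \<Longrightarrow> \<xi> \<noteq> 0 \<Longrightarrow> \<mu> (t *\<^sub>R \<xi>) = t powr \<beta> * \<mu> \<xi>"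
    and t: "t > 0" and z: "z \<noteq> 0"
  shows "dlist is \<mu> (t *\<^sub>R z) = t powr (\<beta> - length is) * dlist is \<mu> z"
proof -
  have U: "open (- {0::real^'n})" by auto
  have AV: "\<And>y. y \<in> - {0} \<Longrightarrow> t *\<^sub>R y + 0 \<in> - {0::real^'n}" using t by auto
  have "t ^ length is * dlist is \<mu> (t *\<^sub>R z) = dlist is (\<lambda>y. \<mu> (t *\<^sub>R y + 0)) z"
    using dlist_affine_comp[OF U U smooth AV, of z "is"] z by simp
  also have "\<dots> = dlist is (\<lambda>y. t powr \<beta> * \<mu> y) z"
    by (rule dlist_cong_open[OF U]) (use homog t z in auto)
  also have "\<dots> = t powr \<beta> * dlist is \<mu> z"
    using dlist_bounded_linear[OF bounded_linear_mult_right U smooth, of z "is"] z by simp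
  also have "\<dots> = t ^ length is * (t powr (\<beta> - length is) * dlist is \<mu> z)"
    using t by (simp add: powr_diff powr_realpow)
  finally show ?thesis using t by simp
qed

text \<open>Derivatives of order at least \<beta> are homogeneous of nonpositive degree.\<close>
lemma dlist_homogeneous_bounded:
  fixes \<mu> :: "real^'n::finite \<Rightarrow> real"
  assumes smooth: "smooth_on (- {0}) \<mu>"
    and homog: "\<And>t \<xi>. t > 0 \<Longrightarrow> \<xi> \<noteq> 0 \<Longrightarrow> \<mu> (t *\<^sub>R \<xi>) = t powr \<beta> * \<mu> \<xi>"
    and order: "\<beta> \<le> length is" and r: "r > 0"
  shows "\<exists>B. \<forall>z. norm z \<ge> r \<longrightarrow> \<bar>dlist is \<mu> z\<bar> \<le> B"
proof -
  have "continuous_on (sphere 0 1) (dlist is \<mu>)"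
    using continuous_on_dlist[OF smooth] by (rule continuous_on_subset) auto
  then have "bounded (dlist is \<mu> ` sphere 0 1)"
    by (intro compact_imp_bounded compact_continuous_image) auto
  then obtain B0 where B0: "\<And>w. norm w = 1 \<Longrightarrow> \<bar>dlist is \<mu> w\<bar> \<le> B0"
    unfolding bounded_iff by fastforce
  have "\<bar>dlist is \<mu> z\<bar> \<le> r powr (\<beta> - length is) * B0" if z: "norm z \<ge> r" for z
  proof -
    let ?w = "z /\<^sub>R norm z"
    have t: "norm z > 0" using z r by linarith
    have w: "?w \<noteq> 0" "norm ?w = 1" using t by auto
    have "dlist is \<mu> z = norm z powr (\<beta> - length is) * dlist is \<mu> ?w"
      using dlist_homogeneous[OF smooth homog t w(1), of "is"] t by simp
    also have "\<bar>\<dots>\<bar> \<le> r powr (\<beta> - length is) * B0"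
      using B0[OF w(2)] powr_mono2'[of "\<beta> - length is" r "norm z"] order z r
      by (auto simp: abs_mult intro!: mult_mono)
    finally show ?thesis .
  qed
  then show ?thesis by blast
qed

lemma bounded_derivatives_if_const_outside:
  fixes G :: "real^'n::finite \<Rightarrow> 'a::real_normed_vector"
  assumes sm: "smooth_on UNIV G" and out: "\<And>z. norm z > r \<Longrightarrow> G z = K"
  shows "bounded_derivatives G"
  unfolding bounded_derivatives_def
proof
  fix "is"
  have "continuous_on (cball 0 r) (dlist is G)"
    using continuous_on_dlist[OF sm open_UNIV] by (rule continuous_on_subset) auto
  then have "bounded (dlist is G ` cball 0 r)"
    by (intro compact_imp_bounded compact_continuous_image) auto
  then obtain B0 where B0: "\<And>w. norm w \<le> r \<Longrightarrow> norm (dlist is G w) \<le> B0"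
    unfolding bounded_iff by fastforce
  have "dlist is G z = dlist is (\<lambda>_. K) z" if "norm z > r" for z
    by (rule dlist_cong_open[of "- cball 0 r"]) (use out that in auto)
  then have "norm (dlist is G z) \<le> max B0 (norm K)" for z
    using B0[of z] by (cases "norm z \<le> r") (auto simp: dlist_const le_max_iff_disj)
  then show "\<exists>B. \<forall>z. norm (dlist is G z) \<le> B" by blast
qed

lemma cutoff_mult_smooth_bounded:
  fixes \<eta> D :: "real^'n::finite \<Rightarrow> real"
  assumes \<eta>: "smooth_on UNIV \<eta>" "bounded_derivatives \<eta>" and r: "r > 0"
    and \<eta>0: "\<And>z. norm z < r \<Longrightarrow> \<eta> z = 0"
    and D: "smooth_on (- {0}) D" "\<And>is. \<exists>B. \<forall>z. norm z \<ge> r \<longrightarrow> \<bar>dlist is D z\<bar> \<le> B"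
  shows "smooth_on UNIV (\<lambda>x. \<eta> x * D x)" and "bounded_derivatives (\<lambda>x. \<eta> x * D x)"
proof -
  define f where "f = (\<lambda>x. \<eta> x * D x)"
  have U: "open (- {0::real^'n})" by auto
  have f0: "\<And>y. y \<in> ball 0 r \<Longrightarrow> f y = 0" using \<eta>0 by (simp add: f_def)
  have "smooth_on (- {0}) f"
    unfolding f_def by (rule smooth_on_mult[OF U smooth_on_subset[OF \<eta>(1)] D(1)]) auto
  moreover have "smooth_on (ball 0 r) f"
    by (rule smooth_on_cong_open[OF open_ball f0 smooth_on_const])
  ultimately show "smooth_on UNIV (\<lambda>x. \<eta> x * D x)"
    unfolding f_def[symmetric] smooth_on_def using r
    by (metis Compl_iff UNIV_I centre_in_ball singletonD)
  from \<eta>(2) obtain R where R: "\<And>c z. \<bar>dlist c \<eta> z\<bar> \<le> R c"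
    unfolding bounded_derivatives_def real_norm_def by metis
  from D(2) obtain B where B: "\<And>d z. norm z \<ge> r \<Longrightarrow> \<bar>dlist d D z\<bar> \<le> B d" by metis
  have R0: "0 \<le> R c" for c
    using R[of c 0] by (auto intro: order_trans[OF abs_ge_zero])
  have RB: "0 \<le> R c * B d" for c d
    using R0[of c] B[of "r *\<^sub>R axis undefined 1" d] r by (auto intro: order_trans[OF abs_ge_zero])
  have "\<bar>dlist a f z\<bar> \<le> (\<Sum>(c,d)\<leftarrow>splits a. R c * B d)" for a z
  proof (cases "norm z < r")
    case True
    have "dlist a f z = dlist a (\<lambda>_. 0) z"
      by (rule dlist_cong_open[of "ball 0 r" f "\<lambda>_. 0"]) (use True f0 in auto)
    then show ?thesis using RB by (auto simp: dlist_const case_prod_unfold intro!: sum_list_nonneg)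
  next
    case False
    then show ?thesis
      unfolding f_def real_norm_def[symmetric] using r R B
      by (intro norm_dlist_mult_le[OF U smooth_on_subset[OF \<eta>(1)] D(1)]) auto
  qed
  then show "bounded_derivatives (\<lambda>x. \<eta> x * D x)"
    unfolding bounded_derivatives_def f_def real_norm_def by blast
qed

lemma one_minus_bump_smooth_bounded:
  fixes \<rho>0 :: "real^'n::finite \<Rightarrow> real"
  assumes "smooth_on UNIV \<rho>0" and "closure {x. \<rho>0 x \<noteq> 0} \<subseteq> ball 0 (1/2)"
  shows "smooth_on UNIV (\<lambda>x. 1 - \<rho>0 x)" and "bounded_derivatives (\<lambda>x. 1 - \<rho>0 x)"
proof -
  show s: "smooth_on UNIV (\<lambda>x. 1 - \<rho>0 x)" by (rule smooth_on_const_diff[OF assms(1)])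
  have "\<rho>0 z = 0" if "norm z > 1/2" for z
    using that assms(2) closure_subset[of "{x. \<rho>0 x \<noteq> 0}"] by force
  then show "bounded_derivatives (\<lambda>x. 1 - \<rho>0 x)"
    by (intro bounded_derivatives_if_const_outside[OF s, of "1/2" 1]) auto
qed

section \<open>Decay of Fourier integrals by finite differences\<close>

definition decay_weight :: "'a::euclidean_space \<Rightarrow> real" where
  "decay_weight y = 1 / (1 + norm y) ^ (2 * DIM('a))"

lemma decay_weight_pos: "decay_weight y > 0"
  unfolding decay_weight_def by (simp add: add_pos_nonneg)

lemma integrable_prod_inverse_1_plus_square:
  "integrable lborel (\<lambda>y::'a::euclidean_space. \<Prod>b\<in>Basis. inverse (1 + (y \<bullet> b)^2))"
proof (subst integrable_iff_bounded, intro conjI)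
  show "(\<lambda>y::'a. \<Prod>b\<in>Basis. inverse (1 + (y \<bullet> b)^2)) \<in> borel_measurable lborel" by measurable
  have "ennreal (norm (\<Prod>b\<in>Basis. inverse (1 + (y \<bullet> b)^2)))
      = (\<Prod>b\<in>Basis. ennreal (inverse (1 + (y \<bullet> b)^2)))" for y :: 'a
    by (simp add: abs_prod prod_nonneg prod_ennreal add_nonneg_nonneg)
  then have "(\<integral>\<^sup>+ (y::'a). ennreal (norm (\<Prod>b\<in>Basis. inverse (1 + (y \<bullet> b)^2))) \<partial>lborel)
      = (\<integral>\<^sup>+ (y::'a). (\<Prod>b\<in>Basis. ennreal (inverse (1 + (y \<bullet> b)^2))) \<partial>lborel)"
    by (intro nn_integral_cong) simp
  also have "\<dots> = (\<Prod>b\<in>(Basis::'a set). \<integral>\<^sup>+ t. ennreal (inverse (1 + t^2)) \<partial>lborel)"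
    by (rule nn_integral_lborel_prod) auto
  also have "\<dots> < \<infinity>"
    using integrable_inverse_1_plus_square
    by (simp add: power_less_top_ennreal set_integrable_def integrable_iff_bounded)
  finally show "(\<integral>\<^sup>+ (y::'a). ennreal (norm (\<Prod>b\<in>Basis. inverse (1 + (y \<bullet> b)^2))) \<partial>lborel) < \<infinity>" .
qed

lemma decay_weight_le_prod:
  fixes y :: "'a::euclidean_space"
  shows "decay_weight y \<le> (\<Prod>b\<in>Basis. inverse (1 + (y \<bullet> b)^2))"
proof -
  have "(\<Prod>b\<in>(Basis::'a set). 1 + (y \<bullet> b)^2) \<le> (\<Prod>b\<in>(Basis::'a set). (1 + norm y)^2)"
  proof (rule prod_mono)
    fix b :: 'a assume b: "b \<in> Basis"
    have "(y \<bullet> b)^2 \<le> (norm y)^2"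
      using Basis_le_norm[OF b] by (metis abs_ge_zero power2_abs power_mono)
    moreover have "(1 + norm y)^2 = 1 + 2 * norm y + (norm y)^2" by (simp add: power2_sum)
    ultimately show "0 \<le> 1 + (y \<bullet> b)^2 \<and> 1 + (y \<bullet> b)^2 \<le> (1 + norm y)^2"
      using norm_ge_zero[of y] zero_le_power2[of "y \<bullet> b"] by linarith
  qed
  also have "\<dots> = (1 + norm y) ^ (2 * DIM('a))" by (simp add: power_mult[symmetric] mult.commute)
  finally have "(\<Prod>b\<in>(Basis::'a set). 1 + (y \<bullet> b)^2) \<le> (1 + norm y) ^ (2 * DIM('a))" .
  moreover have "0 < (\<Prod>b\<in>(Basis::'a set). 1 + (y \<bullet> b)^2)"
    by (intro prod_pos) (auto intro: add_pos_nonneg)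
  ultimately have "inverse ((1 + norm y) ^ (2 * DIM('a))) \<le> inverse (\<Prod>b\<in>(Basis::'a set). 1 + (y \<bullet> b)^2)"
    by (rule le_imp_inverse_le)
  then show ?thesis
    using prod_inversef[of "\<lambda>b. 1 + (y \<bullet> b)^2" Basis] by (simp add: decay_weight_def divide_inverse o_def)
qed

lemma integrable_decay_weight: "integrable lborel (decay_weight :: 'a::euclidean_space \<Rightarrow> real)"
proof (rule Bochner_Integration.integrable_bound[OF integrable_prod_inverse_1_plus_square])
  show "(decay_weight :: 'a \<Rightarrow> real) \<in> borel_measurable lborel"
    unfolding decay_weight_def[abs_def] by measurable
  show "AE y in lborel. norm (decay_weight y) \<le> norm (\<Prod>b\<in>(Basis::'a set). inverse (1 + (y \<bullet> b)^2))"
    by (intro always_eventually allI)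
       (simp add: abs_of_pos[OF decay_weight_pos] abs_prod prod_nonneg decay_weight_le_prod)
qed

lemma integrable_lborel_translate:
  fixes G :: "'a::euclidean_space \<Rightarrow> 'b::{banach, second_countable_topology}"
  assumes "integrable lborel G"
  shows "integrable lborel (\<lambda>y. G (y + h))"
proof -
  have "G \<in> borel_measurable borel" using borel_measurable_integrable[OF assms] by simp
  moreover have "integrable (distr lborel borel ((+) h)) G" using assms by (simp add: lborel_distr_plus)
  ultimately show ?thesis using integrable_distr_eq[of "(+) h" lborel borel G] by (simp add: add.commute)
qed

lemma integral_lborel_translate:
  fixes G :: "'a::euclidean_space \<Rightarrow> 'b::{banach, second_countable_topology}"
  assumes "integrable lborel G"
  shows "(\<integral>y. G (y + h) \<partial>lborel) = (\<integral>y. G y \<partial>lborel)"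
proof -
  have m: "G \<in> borel_measurable borel" using borel_measurable_integrable[OF assms] by simp
  have "(\<integral>y. G y \<partial>lborel) = (\<integral>y. G y \<partial>distr lborel borel ((+) h))" by (simp add: lborel_distr_plus)
  also have "\<dots> = (\<integral>y. G (h + y) \<partial>lborel)" by (rule integral_distr) (use m in auto)
  finally show ?thesis by (simp add: add.commute)
qed

lemma decay_weight_shift_le:
  fixes z v :: "'a::euclidean_space"
  assumes "norm v \<le> a"
  shows "decay_weight z \<le> (1 + a) ^ (2 * DIM('a)) * decay_weight (z + v)"
proof -
  let ?M = "2 * DIM('a)"
  have a0: "0 \<le> a" using assms norm_ge_zero[of v] by linarith
  have "1 + norm (z + v) \<le> (1 + norm z) * (1 + a)"
    using norm_triangle_ineq[of z v] assms mult_nonneg_nonneg[OF norm_ge_zero[of z] a0]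
    by (simp add: algebra_simps)
  then have "(1 + norm (z + v)) ^ ?M \<le> ((1 + norm z) * (1 + a)) ^ ?M"
    by (intro power_mono) auto
  then have le: "1 / ((1 + norm z) * (1 + a)) ^ ?M \<le> 1 / (1 + norm (z + v)) ^ ?M"
    using a0 by (intro divide_left_mono) (auto intro!: mult_pos_pos zero_less_power add_pos_nonneg)
  have "decay_weight z = (1 + a) ^ ?M * (1 / ((1 + norm z) * (1 + a)) ^ ?M)"
    using a0 by (simp add: decay_weight_def power_mult_distrib)
  also have "\<dots> \<le> (1 + a) ^ ?M * (1 / (1 + norm (z + v)) ^ ?M)"
    using a0 by (intro mult_left_mono[OF le]) simp
  finally show ?thesis by (simp add: decay_weight_def)
qed

lemma integrable_if_decay:
  fixes g :: "'a::euclidean_space \<Rightarrow> 'b::{banach, second_countable_topology}"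
  assumes "continuous_on UNIV g" and "\<And>z. norm (g z) \<le> K * decay_weight (z - x0)"
  shows "integrable lborel g"
proof (rule Bochner_Integration.integrable_bound)
  show "integrable lborel (\<lambda>y. K * decay_weight (y - x0))"
    using integrable_lborel_translate[OF integrable_decay_weight, of "- x0"] by simp
  show "g \<in> borel_measurable lborel" using borel_measurable_continuous_onI[OF assms(1)] by simp
  show "AE x in lborel. norm (g x) \<le> norm (K * decay_weight (x - x0))"
    using assms(2) by (auto intro!: always_eventually order_trans[OF _ abs_ge_self])
qed

definition fourier_char :: "'a::euclidean_space \<Rightarrow> 'a \<Rightarrow> complex" where
  "fourier_char \<xi> y = cis (- 2 * pi * (y \<bullet> \<xi>))"

definition half_period :: "'a::euclidean_space \<Rightarrow> 'a" where
  "half_period \<xi> = (1 / (2 * (norm \<xi>)^2)) *\<^sub>R \<xi>"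

lemma norm_fourier_char [simp]: "norm (fourier_char \<xi> y) = 1"
  by (simp add: fourier_char_def)

lemma norm_half_period: "norm (half_period \<xi>) = 1 / (2 * norm \<xi>)"
  by (cases "\<xi> = 0") (simp_all add: half_period_def power2_eq_square)

lemma fourier_char_half_period_shift:
  assumes "\<xi> \<noteq> 0"
  shows "fourier_char \<xi> (y + half_period \<xi>) = - fourier_char \<xi> y"
proof -
  have "(y + half_period \<xi>) \<bullet> \<xi> = y \<bullet> \<xi> + 1/2"
    using assms by (simp add: half_period_def inner_add_left power2_norm_eq_inner[symmetric])
  then have "fourier_char \<xi> (y + half_period \<xi>) = fourier_char \<xi> y * cis (- pi)"
    by (simp add: fourier_char_def cis_mult algebra_simps)
  moreover have "cis (- pi) = -1" by (simp add: complex_eq_iff)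
  ultimately show ?thesis by simp
qed

lemma integrable_mult_fourier_char:
  fixes G :: "'a::euclidean_space \<Rightarrow> complex"
  assumes "integrable lborel G"
  shows "integrable lborel (\<lambda>y. G y * fourier_char \<xi> y)"
proof (rule Bochner_Integration.integrable_bound[OF assms])
  have "continuous_on UNIV (fourier_char \<xi>)"
    unfolding fourier_char_def by (intro continuous_intros)
  then have "fourier_char \<xi> \<in> borel_measurable lborel"
    using borel_measurable_continuous_onI by simp
  then show "(\<lambda>y. G y * fourier_char \<xi> y) \<in> borel_measurable lborel"
    using borel_measurable_integrable[OF assms] by measurable
qed (simp add: norm_mult)

lemma norm_fourier_integral_le:
  fixes G :: "'a::euclidean_space \<Rightarrow> complex"
  assumes "integrable lborel G" and "\<And>y. norm (G y) \<le> K * decay_weight (y - x0)"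
  shows "norm (\<integral>y. G y * fourier_char \<xi> y \<partial>lborel) \<le> K * (\<integral>y. decay_weight (y::'a) \<partial>lborel)"
proof -
  have "norm (\<integral>y. G y * fourier_char \<xi> y \<partial>lborel) \<le> (\<integral>y. K * decay_weight (y - x0) \<partial>lborel)"
    using assms integrable_lborel_translate[OF integrable_decay_weight, of "- x0"]
    by (intro order_trans[OF integral_norm_bound] integral_mono
          integrable_norm integrable_mult_fourier_char) (auto simp: norm_mult)
  also have "\<dots> = K * (\<integral>y. decay_weight (y::'a) \<partial>lborel)"
    using integral_lborel_translate[OF integrable_decay_weight, of "- x0"] by simp
  finally show ?thesis .
qed

fun fin_diff :: "nat \<Rightarrow> 'a::plus \<Rightarrow> ('a \<Rightarrow> 'b::minus) \<Rightarrow> 'a \<Rightarrow> 'b" where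
  "fin_diff 0 h G = G"
| "fin_diff (Suc N) h G = fin_diff N h (\<lambda>y. G y - G (y + h))"

lemma integrable_fin_diff:
  fixes G :: "'a::euclidean_space \<Rightarrow> 'b::{banach, second_countable_topology}"
  shows "integrable lborel G \<Longrightarrow> integrable lborel (fin_diff N h G)"
proof (induction N arbitrary: G)
  case (Suc N)
  then show ?case using integrable_lborel_translate[OF Suc.prems] by simp
qed simp

text \<open>A shift by half a period changes the sign of the character.\<close>
lemma integral_fin_diff_fourier:
  fixes G :: "'a::euclidean_space \<Rightarrow> complex"
  assumes G: "integrable lborel G" and \<xi>: "\<xi> \<noteq> 0"
  shows "(\<integral>y. fin_diff N (half_period \<xi>) G y * fourier_char \<xi> y \<partial>lborel)
       = 2 ^ N * (\<integral>y. G y * fourier_char \<xi> y \<partial>lborel)"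
  using G
proof (induction N arbitrary: G)
  case 0 then show ?case by simp
next
  case (Suc N)
  let ?h = "half_period \<xi>" and ?I = "\<lambda>G. \<integral>y. G y * fourier_char \<xi> y \<partial>lborel"
  have shift: "integrable lborel (\<lambda>y. G (y + ?h))"
    by (rule integrable_lborel_translate[OF Suc.prems])
  have "?I (\<lambda>y. G (y + ?h)) = - (\<integral>y. G (y + ?h) * fourier_char \<xi> (y + ?h) \<partial>lborel)"
    using fourier_char_half_period_shift[OF \<xi>] by simp
  also have "\<dots> = - ?I G"
    using integral_lborel_translate[OF integrable_mult_fourier_char[OF Suc.prems]] by simp
  finally have "?I (\<lambda>y. G y - G (y + ?h)) = 2 * ?I G"
    using integrable_mult_fourier_char[OF Suc.prems] integrable_mult_fourier_char[OF shift]
    by (simp add: left_diff_distrib)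
  then show ?case
    using Suc.IH[of "\<lambda>y. G y - G (y + ?h)"] Suc.prems shift by simp
qed

lemma norm_fin_diff_le:
  fixes P :: "nat \<Rightarrow> real \<Rightarrow> 'b::real_normed_vector"
  assumes "\<And>k s. k < N \<Longrightarrow> (P k has_vector_derivative P (Suc k) s) (at s)"
    and "\<And>s. s \<in> {s0..s0 + real N} \<Longrightarrow> norm (P N s) \<le> B"
  shows "norm (fin_diff N 1 (P 0) s0) \<le> B"
  using assms
proof (induction N arbitrary: P)
  case 0 then show ?case by simp
next
  case (Suc N)
  define Q where "Q k = (\<lambda>s. P k s - P k (s + 1))" for k
  have shift: "((\<lambda>s. f (s + 1)) has_vector_derivative f') (at s)"
    if "(f has_vector_derivative f') (at (s + 1))" for f :: "real \<Rightarrow> 'b" and f' s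
  proof -
    have "((\<lambda>s::real. s + 1) has_vector_derivative 1) (at s)"
      by (auto intro!: derivative_eq_intros)
    from vector_diff_chain_at[OF this that] show ?thesis by (simp add: o_def)
  qed
  have "norm (fin_diff N 1 (Q 0) s0) \<le> B"
  proof (rule Suc.IH)
    fix k s assume "k < N"
    then show "(Q k has_vector_derivative Q (Suc k) s) (at s)"
      unfolding Q_def by (intro has_vector_derivative_diff Suc.prems(1) shift) auto
  next
    fix s assume s: "s \<in> {s0..s0 + real N}"
    have "norm (P N (s + 1) - P N s) \<le> B * (s + 1) - B * s"
      using Suc.prems s
      by (intro differentiable_bound_general[where \<phi>' = "\<lambda>_. B"])
         (auto intro!: derivative_eq_intros continuous_at_imp_continuous_on
               has_vector_derivative_continuous)
    then show "norm (Q N s) \<le> B" by (simp add: Q_def norm_minus_commute algebra_simps)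
  qed
  then show ?case by (simp add: Q_def)
qed

lemma fin_diff_along_line:
  fixes h :: "'a::real_vector"
  shows "fin_diff N h G (y + s *\<^sub>R h) = fin_diff N 1 (\<lambda>s. G (y + s *\<^sub>R h)) s"
proof (induction N arbitrary: G s)
  case 0 then show ?case by simp
next
  case (Suc N)
  have "(\<lambda>s. G (y + s *\<^sub>R h) - G (y + s *\<^sub>R h + h)) = (\<lambda>s. G (y + s *\<^sub>R h) - G (y + (s + 1) *\<^sub>R h))"
    by (simp add: scaleR_add_left add.assoc)
  then show ?case using Suc.IH[of "\<lambda>y. G y - G (y + h)" s] by simp
qed

definition dir_deriv :: "nat \<Rightarrow> real^'n::finite \<Rightarrow> (real^'n \<Rightarrow> 'a::real_normed_vector) \<Rightarrow> real^'n \<Rightarrow> 'a" where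
  "dir_deriv k h G z = (\<Sum>is | length is = k. (\<Prod>i\<leftarrow>is. h$i) *\<^sub>R dlist is G z)"

lemma dir_deriv_0 [simp]: "dir_deriv 0 h G z = G z"
  by (simp add: dir_deriv_def)

lemma has_vector_derivative_along_line:
  fixes F :: "real^'n::finite \<Rightarrow> 'a::real_normed_vector"
  assumes d: "F differentiable (at (y + s *\<^sub>R h))"
  shows "((\<lambda>s. F (y + s *\<^sub>R h)) has_vector_derivative (\<Sum>i\<in>UNIV. h$i *\<^sub>R dpart i F (y + s *\<^sub>R h))) (at s)"
proof -
  let ?D = "frechet_derivative F (at (y + s *\<^sub>R h))"
  have "((\<lambda>s. y + s *\<^sub>R h) has_derivative (\<lambda>t. t *\<^sub>R h)) (at s)"
    by (auto intro!: derivative_eq_intros)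
  from has_derivative_compose[OF this d[unfolded frechet_derivative_works]]
  have c: "((\<lambda>s. F (y + s *\<^sub>R h)) has_derivative (\<lambda>t. ?D (t *\<^sub>R h))) (at s)" .
  have lin: "linear ?D" by (rule linear_frechet_derivative[OF d])
  have "?D h = ?D (\<Sum>i\<in>UNIV. h$i *\<^sub>R axis i 1)"
    using basis_expansion[of h] by (simp add: scalar_mult_eq_scaleR)
  also have "\<dots> = (\<Sum>i\<in>UNIV. h$i *\<^sub>R dpart i F (y + s *\<^sub>R h))"
    by (simp add: linear_sum[OF lin] linear.scaleR[OF lin] dpart_def)
  finally show ?thesis
    using c linear.scaleR[OF lin] unfolding has_vector_derivative_def by simp
qed

lemma has_vector_derivative_dir_deriv:
  fixes G :: "real^'n::finite \<Rightarrow> 'a::real_normed_vector"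
  assumes sm: "smooth_on UNIV G"
  shows "((\<lambda>s. dir_deriv k h G (y + s *\<^sub>R h)) has_vector_derivative dir_deriv (Suc k) h G (y + s *\<^sub>R h)) (at s)"
proof -
  let ?z = "y + s *\<^sub>R h"
  have "((\<lambda>s. dir_deriv k h G (y + s *\<^sub>R h)) has_vector_derivative
        (\<Sum>is | length is = k. (\<Prod>i\<leftarrow>is. h$i) *\<^sub>R (\<Sum>i\<in>UNIV. h$i *\<^sub>R dpart i (dlist is G) ?z))) (at s)"
    unfolding dir_deriv_def
    by (intro has_vector_derivative_sum has_vector_derivative_along_line
      bounded_linear.has_vector_derivative[OF bounded_linear_scaleR_right])
       (use sm in \<open>auto simp: smooth_on_def\<close>)
  also have "(\<Sum>is | length is = k. (\<Prod>i\<leftarrow>is. h$i) *\<^sub>R (\<Sum>i\<in>UNIV. h$i *\<^sub>R dpart i (dlist is G) ?z))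
     = (\<Sum>(i, is)\<in>UNIV \<times> {is. length is = k}. (\<Prod>j\<leftarrow>i # is. h$j) *\<^sub>R dlist (i # is) G ?z)"
    by (simp add: scaleR_sum_right sum.cartesian_product[symmetric] sum.swap[of _ "{is. length is = k}"]
        mult.commute)
  also have "\<dots> = dir_deriv (Suc k) h G ?z"
  proof -
    have Suc: "{is. length is = Suc k} = (\<lambda>(i, is). i # is) ` (UNIV \<times> {is::'n list. length is = k})"
      by (auto simp: image_iff length_Suc_conv)
    have inj: "inj_on (\<lambda>(i, is). i # is) (UNIV \<times> {is::'n list. length is = k})"
      by (auto simp: inj_on_def)
    show ?thesis
      unfolding dir_deriv_def Suc sum.reindex[OF inj] by (simp add: case_prod_unfold)
  qed
  finally show ?thesis .
qed

lemma norm_dir_deriv_le: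
  fixes G :: "real^'n::finite \<Rightarrow> 'a::real_normed_vector"
  assumes K: "\<And>is. length is = k \<Longrightarrow> norm (dlist is G z) \<le> K"
  shows "norm (dir_deriv k h G z) \<le> real CARD('n) ^ k * norm h ^ k * K"
proof -
  have prod_le: "\<bar>\<Prod>i\<leftarrow>is. h$i\<bar> \<le> norm h ^ length is" for "is" :: "'n list"
    by (induction "is") (auto simp: abs_mult intro!: mult_mono component_le_norm_cart)
  have "norm (dir_deriv k h G z) \<le> (\<Sum>is | length is = k. norm ((\<Prod>i\<leftarrow>is. h$i) *\<^sub>R dlist is G z))"
    unfolding dir_deriv_def by (rule norm_sum)
  also have "\<dots> \<le> (\<Sum>is::'n list | length is = k. norm h ^ k * K)"
  proof (rule sum_mono)
    fix "is" :: "'n list" assume "is \<in> {is. length is = k}"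
    then show "norm ((\<Prod>i\<leftarrow>is. h$i) *\<^sub>R dlist is G z) \<le> norm h ^ k * K"
      using K[of "is"] prod_le[of "is"] by (auto intro!: mult_mono)
  qed
  also have "\<dots> = real CARD('n) ^ k * norm h ^ k * K"
    using card_lists_length_eq[of "UNIV :: 'n set" k] by simp
  finally show ?thesis .
qed

text \<open>The mean value theorem along h reduces the N-th difference to the N-th derivative
  in direction h on a segment of length at most N/2.\<close>
lemma norm_fin_diff_le_decay:
  fixes g :: "real^'n::finite \<Rightarrow> complex"
  assumes sm: "smooth_on UNIV g" and h: "norm h \<le> 1/2"
    and KN: "\<And>is z. length is = N \<Longrightarrow> norm (dlist is g z) \<le> KN * decay_weight (z - x0)"
  shows "norm (fin_diff N h g y)
    \<le> real CARD('n) ^ N * norm h ^ N * KN * (1 + N / 2) ^ (2 * CARD('n)) * decay_weight (y - x0)"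
proof -
  let ?C = "real CARD('n) ^ N * norm h ^ N * KN"
  have "0 \<le> KN * decay_weight (x0 - x0)"
    using KN[of "replicate N undefined" x0] by (auto intro: order_trans[OF norm_ge_zero])
  then have KN0: "0 \<le> KN"
    using decay_weight_pos[of "x0 - x0"] by (simp add: zero_le_mult_iff)
  have "fin_diff N h g y = fin_diff N 1 (\<lambda>s. dir_deriv 0 h g (y + s *\<^sub>R h)) 0"
    using fin_diff_along_line[of N h g y 0] by simp
  also have "norm \<dots> \<le> ?C * ((1 + N / 2) ^ (2 * CARD('n)) * decay_weight (y - x0))"
  proof (rule norm_fin_diff_le[where P="\<lambda>k s. dir_deriv k h g (y + s *\<^sub>R h)"])
    fix k s
    show "((\<lambda>s. dir_deriv k h g (y + s *\<^sub>R h)) has_vector_derivative dir_deriv (Suc k) h g (y + s *\<^sub>R h)) (at s)"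
      by (rule has_vector_derivative_dir_deriv[OF sm])
  next
    fix s assume s: "s \<in> {0..0 + real N}"
    have "norm (- (s *\<^sub>R h)) \<le> N / 2"
      using s h mult_mono[of s N "norm h" "1/2"] by simp
    then have "decay_weight (y + s *\<^sub>R h - x0) \<le> (1 + N / 2) ^ (2 * CARD('n)) * decay_weight (y - x0)"
      using decay_weight_shift_le[of "- (s *\<^sub>R h)" "N / 2" "y + s *\<^sub>R h - x0"] by simp
    then have "?C * decay_weight (y + s *\<^sub>R h - x0) \<le> ?C * ((1 + N / 2) ^ (2 * CARD('n)) * decay_weight (y - x0))"
      using KN0 by (intro mult_left_mono) auto
    moreover have "norm (dir_deriv N h g (y + s *\<^sub>R h)) \<le> ?C * decay_weight (y + s *\<^sub>R h - x0)"
      using norm_dir_deriv_le[of N g "y + s *\<^sub>R h" "KN * decay_weight (y + s *\<^sub>R h - x0)" h] KN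
      by (simp only: mult.assoc)
    ultimately show "norm (dir_deriv N h g (y + s *\<^sub>R h)) \<le> ?C * ((1 + N / 2) ^ (2 * CARD('n)) * decay_weight (y - x0))"
      by (rule order_trans[rotated])
  qed
  finally show ?thesis by (simp add: mult_ac)
qed

lemma norm_fourier_integral_decay:
  fixes g :: "real^'n::finite \<Rightarrow> complex"
  assumes sm: "smooth_on UNIV g"
    and K0: "\<And>z. norm (g z) \<le> K0 * decay_weight (z - x0)"
    and KN: "\<And>is z. length is = N \<Longrightarrow> norm (dlist is g z) \<le> KN * decay_weight (z - x0)"
    and \<xi>: "norm \<xi> \<ge> 1"
  shows "norm (\<integral>y. g y * fourier_char \<xi> y \<partial>lborel)
     \<le> real CARD('n) ^ N * KN * (1 + N / 2) ^ (2 * CARD('n)) * (\<integral>y. decay_weight (y::real^'n) \<partial>lborel)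
        / 4 ^ N / norm \<xi> ^ N"
    (is "?X \<le> ?c / 4 ^ N / norm \<xi> ^ N")
proof -
  let ?h = "half_period \<xi>"
  have gi: "integrable lborel g"
    by (rule integrable_if_decay[OF continuous_on_dlist[OF sm open_UNIV, of "[]", simplified] K0])
  have \<xi>0: "\<xi> \<noteq> 0" using \<xi> by auto
  have "norm ?h \<le> 1/2" using \<xi> by (simp add: norm_half_period divide_le_eq)
  then have "norm (fin_diff N ?h g y)
      \<le> real CARD('n) ^ N * norm ?h ^ N * KN * (1 + N / 2) ^ (2 * CARD('n)) * decay_weight (y - x0)" for y
    by (rule norm_fin_diff_le_decay[OF sm _ KN])
  then have "norm (\<integral>y. fin_diff N ?h g y * fourier_char \<xi> y \<partial>lborel)
      \<le> real CARD('n) ^ N * norm ?h ^ N * KN * (1 + N / 2) ^ (2 * CARD('n)) * (\<integral>y. decay_weight (y::real^'n) \<partial>lborel)"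
    by (rule norm_fourier_integral_le[OF integrable_fin_diff[OF gi]])
  also have "\<dots> = ?c * norm ?h ^ N" by (simp only: mult_ac)
  also have "\<dots> = ?c / (2 ^ N * norm \<xi> ^ N)"
    by (simp add: norm_half_period power_mult_distrib power_one_over)
  finally have "2 ^ N * ?X \<le> ?c / (2 ^ N * norm \<xi> ^ N)"
    using integral_fin_diff_fourier[OF gi \<xi>0, of N] by (auto simp: norm_mult norm_power)
  then have "?X \<le> ?c / (2 ^ N * norm \<xi> ^ N) / 2 ^ N"
    by (subst pos_le_divide_eq) (simp_all add: mult.commute)
  also have "\<dots> = ?c / (2 ^ N * 2 ^ N * norm \<xi> ^ N)"
    by (simp only: divide_divide_eq_left mult_ac)
  also have "\<dots> = ?c / 4 ^ N / norm \<xi> ^ N"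
  proof -
    have "(2::real) ^ N * 2 ^ N = 4 ^ N" by (simp flip: power_mult_distrib)
    then show ?thesis by (simp only: divide_divide_eq_left)
  qed
  finally show ?thesis .
qed

section \<open>Membership in the Wiener amalgam space\<close>

lemma jbr_ge_1: "jbr \<xi> \<ge> 1"
  by (simp add: jbr_def)

lemma jbr_le: "jbr \<xi> \<le> 2 * max 1 (norm \<xi>)"
proof -
  have "1 + (norm \<xi>)^2 \<le> (2 * max 1 (norm \<xi>))^2"
  proof (cases "norm \<xi> \<le> 1")
    case True
    then have "(norm \<xi>)^2 \<le> 1" by (simp add: power_le_one)
    then show ?thesis using True by simp
  next
    case False
    then have "1 \<le> (norm \<xi>)^2" by (simp add: one_le_power)
    moreover have "(2 * max 1 (norm \<xi>))^2 = 4 * (norm \<xi>)^2"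
      using False by (simp add: power_mult_distrib)
    ultimately show ?thesis by linarith
  qed
  then have "jbr \<xi> \<le> sqrt ((2 * max 1 (norm \<xi>))^2)"
    unfolding jbr_def by (rule real_sqrt_le_mono)
  moreover have "sqrt ((2 * max 1 (norm \<xi>))^2) = 2 * max 1 (norm \<xi>)"
    by (rule real_sqrt_unique) auto
  ultimately show ?thesis by linarith
qed

lemma weighted_bound_from_decay:
  fixes X A C s :: real
  assumes s: "s \<le> N" and X: "X \<le> A" "norm \<xi> \<ge> 1 \<Longrightarrow> X \<le> C / norm \<xi> ^ N"
    and nonneg: "0 \<le> X" "0 \<le> A" "0 \<le> C"
  shows "X * jbr \<xi> powr s \<le> (A + C) * 2 ^ N"
proof -
  have "jbr \<xi> powr s \<le> jbr \<xi> ^ N"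
    using powr_mono[OF s jbr_ge_1[of \<xi>]] jbr_ge_1[of \<xi>] by (simp add: powr_realpow)
  then have "X * jbr \<xi> powr s \<le> X * jbr \<xi> ^ N"
    using nonneg(1) by (rule mult_left_mono)
  also have "\<dots> \<le> X * (2 * max 1 (norm \<xi>)) ^ N"
    using jbr_le jbr_ge_1[of \<xi>] nonneg by (intro mult_left_mono power_mono) auto
  also have "\<dots> \<le> (A + C) * 2 ^ N"
  proof (cases "norm \<xi> \<ge> 1")
    case True
    then have "0 < norm \<xi> ^ N" by (intro zero_less_power) linarith
    then have "X * norm \<xi> ^ N \<le> C" using X(2)[OF True] by (simp add: pos_le_divide_eq)
    then show ?thesis
      using True nonneg by (simp add: power_mult_distrib mult_ac mult_right_mono)
  next
    case False
    then show ?thesis using X(1) nonneg by (simp add: mult_right_mono)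
  qed
  finally show ?thesis .
qed

lemma smooth_on_window:
  fixes \<phi> :: "real^'n::finite \<Rightarrow> complex"
  assumes sm: "smooth_on UNIV \<phi>"
  shows "dlist is (\<lambda>y. cnj (\<phi> (y - x))) z = cnj (dlist is \<phi> (z - x))"
    and "smooth_on UNIV (\<lambda>y. cnj (\<phi> (y - x)))"
  using dlist_bounded_linear[OF bounded_linear_cnj open_UNIV dlist_translate(2)[OF sm, of x], of z "is"]
    dlist_translate(1)[OF sm]
    smooth_on_bounded_linear[OF bounded_linear_cnj open_UNIV dlist_translate(2)[OF sm, of x]]
  by auto

lemma windowed_dlist_bound:
  fixes f :: "real^'n::finite \<Rightarrow> real" and \<phi> :: "real^'n \<Rightarrow> complex"
  assumes fs: "smooth_on UNIV f" and fb: "bounded_derivatives f" and win: "schwartz \<phi>"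
  obtains K where "\<And>is x z. norm (dlist is (\<lambda>y. of_real (f y) * cnj (\<phi> (y - x))) z)
                              \<le> K (length is) * decay_weight (z - x)"
proof -
  let ?M = "2 * CARD('n)"
  have \<phi>s: "smooth_on UNIV \<phi>" using win by (simp add: schwartz_def)
  from fb obtain A where A: "\<And>a z. \<bar>dlist a f z\<bar> \<le> A a"
    unfolding bounded_derivatives_def real_norm_def by metis
  have "\<forall>b. \<exists>C. \<forall>w. (1 + norm w) ^ ?M * norm (dlist b \<phi> w) \<le> C"
    using win by (simp add: schwartz_def)
  then obtain C where C: "\<And>b w. (1 + norm w) ^ ?M * norm (dlist b \<phi> w) \<le> C b"
    by metis
  have Cw: "norm (dlist b \<phi> w) \<le> C b * decay_weight w" for b w
    using C[of w b] by (simp add: decay_weight_def field_simps add_pos_nonneg)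
  define fc where "fc = (\<lambda>y. complex_of_real (f y))"
  have fcs: "smooth_on UNIV fc"
    unfolding fc_def by (rule smooth_on_bounded_linear[OF bounded_linear_of_real open_UNIV fs])
  have fcd: "dlist a fc z = of_real (dlist a f z)" for a z
    unfolding fc_def by (rule dlist_bounded_linear[OF bounded_linear_of_real open_UNIV fs]) simp
  define KK where "KK is = (\<Sum>(a,b)\<leftarrow>splits is. A a * C b)" for "is"
  have KK: "norm (dlist is (\<lambda>y. fc y * cnj (\<phi> (y - x))) z) \<le> KK is * decay_weight (z - x)" for "is" x z
  proof -
    have "norm (dlist is (\<lambda>y. fc y * cnj (\<phi> (y - x))) z)
        \<le> (\<Sum>(a,b)\<leftarrow>splits is. A a * (C b * decay_weight (z - x)))"
      using A Cw[of _ "z - x"]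
      by (intro norm_dlist_mult_le[OF open_UNIV fcs smooth_on_window(2)[OF \<phi>s]])
         (auto simp: fcd smooth_on_window(1)[OF \<phi>s])
    then show ?thesis
      unfolding KK_def by (simp add: sum_list_mult_const case_prod_unfold flip: mult.assoc)
  qed
  have KK0: "0 \<le> KK is" for "is"
    using order_trans[OF norm_ge_zero KK[of "is" 0 0]] decay_weight_pos[of "0 - 0 :: real^'n"]
    by (simp add: zero_le_mult_iff)
  define K where "K n = (\<Sum>is::'n list | length is = n. KK is)" for n
  have "KK is \<le> K (length is)" for "is"
    unfolding K_def
    by (rule member_le_sum) (use KK0 finite_lists_length_eq[of "UNIV :: 'n set" "length is"] in auto)
  then have "norm (dlist is (\<lambda>y. fc y * cnj (\<phi> (y - x))) z) \<le> K (length is) * decay_weight (z - x)"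
    for "is" x z
    using KK[of "is" x z] decay_weight_pos[of "z - x"] by (meson mult_right_mono order_trans less_imp_le)
  then show ?thesis using that unfolding fc_def by blast
qed

theorem in_W_inf_inf_if_bounded_derivatives:
  fixes f :: "real^'n::finite \<Rightarrow> real" and \<phi> :: "real^'n \<Rightarrow> complex"
  assumes fs: "smooth_on UNIV f" and fb: "bounded_derivatives f" and win: "schwartz \<phi>"
  shows "in_W_inf_inf \<phi> s (\<lambda>x. complex_of_real (f x))"
proof -
  define g where "g x = (\<lambda>y. complex_of_real (f y) * cnj (\<phi> (y - x)))" for x
  obtain K where K: "\<And>is x z. norm (dlist is (g x) z) \<le> K (length is) * decay_weight (z - x)"
    using windowed_dlist_bound[OF fs fb win] unfolding g_def by blast
  have gs: "smooth_on UNIV (g x)" for x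
    unfolding g_def using win
    by (intro smooth_on_mult[OF open_UNIV] smooth_on_window(2) smooth_on_bounded_linear[OF
        bounded_linear_of_real open_UNIV fs]) (simp add: schwartz_def)
  have g0: "norm (g x z) \<le> K 0 * decay_weight (z - x)" for x z
    using K[of "[]" x z] by simp
  have gi: "integrable lborel (g x)" for x
    by (rule integrable_if_decay[OF continuous_on_dlist[OF gs open_UNIV, of "[]", simplified] g0])
  have STFT: "STFT \<phi> (\<lambda>x. complex_of_real (f x)) x \<xi> = (\<integral>y. g x y * fourier_char \<xi> y \<partial>lborel)" for x \<xi>
    by (simp add: STFT_def g_def fourier_char_def)
  define N where "N = nat \<lceil>s\<rceil>"
  define I where "I = (\<integral>y. decay_weight (y::real^'n) \<partial>lborel)"
  have I0: "0 \<le> I"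
    unfolding I_def by (rule integral_nonneg_AE) (auto intro!: always_eventually less_imp_le decay_weight_pos)
  have K0: "0 \<le> K n" for n
    using order_trans[OF norm_ge_zero K[of "replicate n undefined" 0 0]] decay_weight_pos[of "0 - 0 :: real^'n"]
    by (simp add: zero_le_mult_iff)
  have "norm (STFT \<phi> (\<lambda>x. complex_of_real (f x)) x \<xi>) * jbr \<xi> powr s
      \<le> (K 0 * I + real CARD('n) ^ N * K N * (1 + N / 2) ^ (2 * CARD('n)) * I / 4 ^ N) * 2 ^ N" for x \<xi>
    unfolding STFT I_def
  proof (rule weighted_bound_from_decay)
    show "s \<le> real N" unfolding N_def by linarith
    show "norm (\<integral>y. g x y * fourier_char \<xi> y \<partial>lborel) \<le> K 0 * (\<integral>y. decay_weight (y::real^'n) \<partial>lborel)"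
      by (rule norm_fourier_integral_le[OF gi g0])
    show "norm (\<integral>y. g x y * fourier_char \<xi> y \<partial>lborel)
        \<le> real CARD('n) ^ N * K N * (1 + N / 2) ^ (2 * CARD('n)) * (\<integral>y. decay_weight (y::real^'n) \<partial>lborel)
           / 4 ^ N / norm \<xi> ^ N" if "norm \<xi> \<ge> 1"
      by (rule norm_fourier_integral_decay[OF gs g0 _ that]) (use K in fastforce)
  qed (use I0 K0 in \<open>simp_all add: I_def\<close>)
  moreover have "integrable lborel (\<lambda>y. complex_of_real (f y) * cnj (\<phi> (y - x)) * cis (- 2 * pi * (y \<bullet> \<xi>)))"
    for x \<xi>
    using integrable_mult_fourier_char[OF gi[of x], of \<xi>] by (simp add: g_def fourier_char_def)
  ultimately show ?thesis unfolding in_W_inf_inf_def by blast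
qed

section \<open>A definite Hessian on the sphere\<close>

lemma DERIV_local_min_second_deriv_nonneg:
  fixes h h' :: "real \<Rightarrow> real"
  assumes d: "\<delta> > 0" and min: "\<And>t. \<bar>t\<bar> < \<delta> \<Longrightarrow> h 0 \<le> h t"
    and D1: "\<And>t. \<bar>t\<bar> < \<delta> \<Longrightarrow> DERIV h t :> h' t"
    and D2: "DERIV h' 0 :> c"
  shows "c \<ge> 0"
proof (rule ccontr)
  assume "\<not> c \<ge> 0"
  then have c: "c < 0" by simp
  have h'0: "h' 0 = 0"
    by (rule DERIV_local_min[OF D1[of 0] d]) (use d min in auto)
  obtain e where e: "e > 0" "\<And>s. s > 0 \<Longrightarrow> s < e \<Longrightarrow> h' 0 > h' (0 + s)"
    using DERIV_neg_dec_right[OF D2 c] by blast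
  define t where "t = min e \<delta> / 2"
  have t: "0 < t" "t < e" "t < \<delta>" using e d by (auto simp: t_def)
  have "h t < h 0"
  proof (rule DERIV_neg_imp_decreasing_open[OF t(1)])
    fix x assume "0 < x" "x < t"
    then show "\<exists>y. DERIV h x :> y \<and> y < 0"
      using D1[of x] e(2)[of x] t h'0 by auto
  next
    have "isCont h x" if "x \<in> {0..t}" for x
      using that t D1[of x] DERIV_isCont by auto
    then show "continuous_on {0..t} h" by (intro continuous_at_imp_continuous_on) auto
  qed
  then show False using min[of t] t by auto
qed

lemma DERIV_quadratic_powr:
  fixes a b \<beta> :: real
  defines "q \<equiv> \<lambda>t. 1 + 2 * t * a + t^2 * b"
  defines "q' \<equiv> \<lambda>t. 2 * a + 2 * t * b"
  shows "\<And>t. q t > 0 \<Longrightarrow> DERIV (\<lambda>t. q t powr (\<beta>/2)) t :> \<beta>/2 * (q t powr (\<beta>/2 - 1) * q' t)"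
    and "DERIV (\<lambda>t. \<beta>/2 * (q t powr (\<beta>/2 - 1) * q' t)) 0 :> \<beta> * (\<beta> - 2) * a^2 + \<beta> * b"
proof -
  have Dq: "DERIV q t :> q' t" for t
    unfolding q_def q'_def by (auto intro!: derivative_eq_intros simp: power2_eq_square)
  show "\<And>t. q t > 0 \<Longrightarrow> DERIV (\<lambda>t. q t powr (\<beta>/2)) t :> \<beta>/2 * (q t powr (\<beta>/2 - 1) * q' t)"
    using DERIV_fun_powr[OF Dq, of _ "\<beta>/2"] by (simp add: mult.assoc)
  have q0: "q 0 = 1" by (simp add: q_def)
  have A: "DERIV (\<lambda>t. q t powr (\<beta>/2 - 1)) 0 :> (\<beta>/2 - 1) * q 0 powr (\<beta>/2 - 1 - 1) * q' 0"
    using DERIV_fun_powr[OF Dq, of 0 "\<beta>/2 - 1"] q0 by simp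
  have B: "DERIV q' 0 :> 2 * b" unfolding q'_def by (auto intro!: derivative_eq_intros)
  have "DERIV (\<lambda>t. \<beta>/2 * (q t powr (\<beta>/2 - 1) * q' t)) 0 :>
      \<beta>/2 * ((\<beta>/2 - 1) * q 0 powr (\<beta>/2 - 1 - 1) * q' 0 * q' 0 + q 0 powr (\<beta>/2 - 1) * (2 * b))"
    using DERIV_cmult[OF DERIV_mult[OF A B], of "\<beta>/2"] by (simp add: mult.commute)
  also have "\<beta>/2 * ((\<beta>/2 - 1) * q 0 powr (\<beta>/2 - 1 - 1) * q' 0 * q' 0 + q 0 powr (\<beta>/2 - 1) * (2 * b))
      = \<beta> * (\<beta> - 2) * a^2 + \<beta> * b"
    by (simp add: q0 q'_def power2_eq_square field_simps)
  finally show "DERIV (\<lambda>t. \<beta>/2 * (q t powr (\<beta>/2 - 1) * q' t)) 0 :> \<beta> * (\<beta> - 2) * a^2 + \<beta> * b" .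
qed

lemma has_real_derivative_along_line:
  fixes F :: "real^'n::finite \<Rightarrow> real"
  assumes "F differentiable (at (y + s *\<^sub>R h))"
  shows "DERIV (\<lambda>s. F (y + s *\<^sub>R h)) s :> (\<Sum>i\<in>UNIV. h$i * dpart i F (y + s *\<^sub>R h))"
  using has_vector_derivative_along_line[OF assms] by (simp add: has_real_derivative_iff_has_vector_derivative)

lemma quadratic_form_eq_sum:
  fixes H :: "real^'n::finite^'n"
  shows "v \<bullet> (H *v v) = (\<Sum>i\<in>UNIV. v$i * (\<Sum>j\<in>UNIV. v$j * H$j$i))"
proof -
  have "v \<bullet> (H *v v) = (\<Sum>i\<in>UNIV. \<Sum>j\<in>UNIV. v$i * v$j * H$i$j)"
    by (simp add: inner_vec_def matrix_vector_mult_def sum_distrib_left mult_ac)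
  also have "\<dots> = (\<Sum>j\<in>UNIV. \<Sum>i\<in>UNIV. v$i * v$j * H$i$j)" by (rule sum.swap)
  also have "\<dots> = (\<Sum>i\<in>UNIV. v$i * (\<Sum>j\<in>UNIV. v$j * H$j$i))"
    by (simp add: sum_distrib_left mult_ac)
  finally show ?thesis .
qed

lemma powr_half_power2:
  fixes x :: real
  assumes "x \<ge> 0"
  shows "(x^2) powr (b/2) = x powr b"
proof (cases "x = 0")
  case False
  then have "x^2 = x powr 2" using assms powr_realpow[of x 2] by simp
  then show ?thesis by (simp add: powr_powr)
qed simp

lemma open_contains_line_segment:
  fixes x v :: "'a::real_normed_vector"
  assumes "open V" "x \<in> V"
  obtains \<delta> where "\<delta> > 0" "\<And>t. \<bar>t\<bar> < \<delta> \<Longrightarrow> x + t *\<^sub>R v \<in> V"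
proof -
  obtain \<delta>0 where \<delta>0: "\<delta>0 > 0" "ball x \<delta>0 \<subseteq> V" using assms open_contains_ball by blast
  have "x + t *\<^sub>R v \<in> V" if "\<bar>t\<bar> < \<delta>0 / (norm v + 1)" for t
  proof -
    have "\<bar>t\<bar> * norm v \<le> \<bar>t\<bar> * (norm v + 1)" by (simp add: mult_left_mono)
    also have "\<dots> < \<delta>0"
      using that pos_less_divide_eq[of "norm v + 1" "\<bar>t\<bar>" \<delta>0] add_pos_nonneg[of 1 "norm v"]
      by (simp add: add.commute)
    finally show ?thesis using \<delta>0 by (auto simp: dist_norm)
  qed
  moreover have "0 < \<delta>0 / (norm v + 1)"
    using \<delta>0 norm_ge_zero[of v] by (intro divide_pos_pos) linarith+
  ultimately show ?thesis using that by blast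
qed

lemma power2_norm_add_scaleR:
  fixes x v :: "'a::real_inner"
  shows "(norm (x + t *\<^sub>R v))^2 = x \<bullet> x + 2 * t * (x \<bullet> v) + t^2 * (v \<bullet> v)"
proof -
  have "(norm (x + t *\<^sub>R v))^2 = (x + t *\<^sub>R v) \<bullet> (x + t *\<^sub>R v)"
    by (rule power2_norm_eq_inner)
  also have "\<dots> = x \<bullet> x + 2 * t * (x \<bullet> v) + t^2 * (v \<bullet> v)"
    by (simp add: inner_add_left inner_add_right inner_commute algebra_simps power2_eq_square)
  finally show ?thesis .
qed

text \<open>Along each line through \<kappa>, \<sigma> \<mu> - m |\<cdot>|^\<beta> has a local minimum at \<kappa>; its second
  derivative there is the difference of the two sides.\<close>
lemma hessian_ge_touching_power:
  fixes \<mu> :: "real^'n::finite \<Rightarrow> real"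
  assumes smooth: "smooth_on (- {0}) \<mu>"
    and V: "open V" "V \<subseteq> - {0}" "\<kappa> \<in> V" and \<kappa>: "norm \<kappa> = 1"
    and below: "\<And>\<xi>. \<xi> \<in> V \<Longrightarrow> m * norm \<xi> powr \<beta> \<le> \<sigma> * \<mu> \<xi>" and touch: "\<sigma> * \<mu> \<kappa> = m"
  shows "m * (\<beta> * (\<beta> - 2) * (\<kappa> \<bullet> v)^2 + \<beta> * (v \<bullet> v)) \<le> \<sigma> * (v \<bullet> (hessian \<mu> \<kappa> *v v))"
proof -
  define a where "a = \<kappa> \<bullet> v"
  define b where "b = v \<bullet> v"
  define q where "q = (\<lambda>t::real. 1 + 2 * t * a + t^2 * b)"
  define q' where "q' = (\<lambda>t::real. 2 * a + 2 * t * b)"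
  obtain \<delta> where \<delta>: "\<delta> > 0" and line: "\<And>t. \<bar>t\<bar> < \<delta> \<Longrightarrow> \<kappa> + t *\<^sub>R v \<in> V"
    using open_contains_line_segment[OF V(1,3), of v] by blast
  have qn: "q t = (norm (\<kappa> + t *\<^sub>R v))^2" for t
    using power2_norm_add_scaleR[of \<kappa> t v] \<kappa> power2_norm_eq_inner[of \<kappa>] by (simp add: q_def a_def b_def)
  have qpos: "q t > 0" if "\<bar>t\<bar> < \<delta>" for t
    using line[OF that] V(2) by (auto simp: qn)
  define h where "h t = \<sigma> * \<mu> (\<kappa> + t *\<^sub>R v) - m * q t powr (\<beta>/2)" for t
  define h' where "h' t = \<sigma> * (\<Sum>i\<in>UNIV. v$i * dpart i \<mu> (\<kappa> + t *\<^sub>R v))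
      - m * (\<beta>/2 * (q t powr (\<beta>/2 - 1) * q' t))" for t
  have hmin: "h 0 \<le> h t" if "\<bar>t\<bar> < \<delta>" for t
    using below[OF line[OF that]] touch \<kappa> by (simp add: h_def qn powr_half_power2)
  have D1: "DERIV h t :> h' t" if t: "\<bar>t\<bar> < \<delta>" for t
  proof -
    have "\<mu> differentiable (at (\<kappa> + t *\<^sub>R v))"
      using smooth_on_imp_differentiable[OF smooth] line[OF t] V(2) by blast
    then show ?thesis
      unfolding h_def h'_def
      using DERIV_quadratic_powr(1)[of t a b \<beta>] qpos[OF t]
      by (intro DERIV_diff DERIV_cmult has_real_derivative_along_line) (simp_all add: q_def q'_def)
  qed
  have "DERIV (\<lambda>t. dpart i \<mu> (\<kappa> + t *\<^sub>R v)) 0 :> (\<Sum>j\<in>UNIV. v$j * dpart j (dpart i \<mu>) \<kappa>)" for i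
  proof -
    have "dlist [i] \<mu> differentiable (at (\<kappa> + 0 *\<^sub>R v))"
      using smooth_on_dlist_differentiable[OF smooth, of \<kappa> "[i]"] V(2,3) by auto
    from has_real_derivative_along_line[OF this] show ?thesis by simp
  qed
  then have "DERIV (\<lambda>t. \<Sum>i\<in>UNIV. v$i * dpart i \<mu> (\<kappa> + t *\<^sub>R v)) 0
      :> (\<Sum>i\<in>UNIV. v$i * (\<Sum>j\<in>UNIV. v$j * dpart j (dpart i \<mu>) \<kappa>))"
    by (intro DERIV_sum DERIV_cmult)
  moreover have "DERIV (\<lambda>t. \<beta>/2 * (q t powr (\<beta>/2 - 1) * q' t)) 0 :> \<beta> * (\<beta> - 2) * a^2 + \<beta> * b"
    using DERIV_quadratic_powr(2)[of \<beta> a b] by (simp add: q_def q'_def)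
  ultimately have "DERIV h' 0 :> \<sigma> * (\<Sum>i\<in>UNIV. v$i * (\<Sum>j\<in>UNIV. v$j * dpart j (dpart i \<mu>) \<kappa>))
      - m * (\<beta> * (\<beta> - 2) * a^2 + \<beta> * b)"
    unfolding h'_def by (intro DERIV_diff DERIV_cmult)
  from DERIV_local_min_second_deriv_nonneg[OF \<delta> hmin D1 this]
  show ?thesis by (simp add: a_def b_def quadratic_form_eq_sum hessian_def)
qed

text \<open>\<kappa> minimises |\<mu>| on the sphere and \<sigma> is the sign of \<mu> \<kappa>; by homogeneity
  m |\<xi>|^\<beta> \<le> |\<mu> \<xi>|, which equals \<sigma> \<mu> \<xi> on V.\<close>
lemma homogeneous_touching_power:
  fixes \<mu> :: "real^'n::finite \<Rightarrow> real"
  assumes cont: "continuous_on (- {0}) \<mu>"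
    and homog: "\<And>t \<xi>. t > 0 \<Longrightarrow> \<xi> \<noteq> 0 \<Longrightarrow> \<mu> (t *\<^sub>R \<xi>) = t powr \<beta> * \<mu> \<xi>"
    and nonzero: "\<And>\<xi>. \<xi> \<noteq> 0 \<Longrightarrow> \<mu> \<xi> \<noteq> 0"
  obtains \<kappa> \<sigma> m V where "norm \<kappa> = 1" "\<bar>\<sigma>\<bar> = 1" "m > 0" "open V" "V \<subseteq> - {0}" "\<kappa> \<in> V"
    "\<And>\<xi>. \<xi> \<in> V \<Longrightarrow> m * norm \<xi> powr \<beta> \<le> \<sigma> * \<mu> \<xi>" "\<sigma> * \<mu> \<kappa> = m"
proof -
  have "\<exists>\<kappa>\<in>sphere (0::real^'n) 1. \<forall>y\<in>sphere 0 1. \<bar>\<mu> \<kappa>\<bar> \<le> \<bar>\<mu> y\<bar>"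
  proof (rule continuous_attains_inf)
    show "sphere (0::real^'n) 1 \<noteq> {}"
      using norm_axis_1[of undefined] by (metis mem_sphere_0 empty_iff)
    show "continuous_on (sphere 0 1) (\<lambda>\<xi>. \<bar>\<mu> \<xi>\<bar>)"
      by (intro continuous_intros continuous_on_subset[OF cont]) auto
  qed auto
  then obtain \<kappa> where \<kappa>: "norm \<kappa> = 1" and kmin: "\<And>y. norm y = 1 \<Longrightarrow> \<bar>\<mu> \<kappa>\<bar> \<le> \<bar>\<mu> y\<bar>" by auto
  have "\<kappa> \<noteq> 0" using \<kappa> by auto
  define m where "m = \<bar>\<mu> \<kappa>\<bar>"
  define \<sigma> where "\<sigma> = sgn (\<mu> \<kappa>)"
  have m: "m > 0" and \<sigma>: "\<bar>\<sigma>\<bar> = 1" "\<sigma> * \<mu> \<kappa> = m"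
    using nonzero[OF \<open>\<kappa> \<noteq> 0\<close>] by (auto simp: m_def \<sigma>_def sgn_if)
  have lower: "m * norm \<xi> powr \<beta> \<le> \<bar>\<mu> \<xi>\<bar>" if "\<xi> \<noteq> 0" for \<xi>
  proof -
    let ?w = "\<xi> /\<^sub>R norm \<xi>"
    have w: "norm ?w = 1" using that by simp
    have "\<mu> \<xi> = norm \<xi> powr \<beta> * \<mu> ?w"
      using homog[of "norm \<xi>" ?w] that w by auto
    then have "\<bar>\<mu> \<xi>\<bar> = norm \<xi> powr \<beta> * \<bar>\<mu> ?w\<bar>" by (simp add: abs_mult)
    moreover have "norm \<xi> powr \<beta> * m \<le> norm \<xi> powr \<beta> * \<bar>\<mu> ?w\<bar>"
      using kmin[OF w] by (simp add: m_def mult_left_mono)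
    ultimately show ?thesis by (simp add: mult.commute)
  qed
  define V where "V = - {0} \<inter> (\<lambda>\<xi>. \<sigma> * \<mu> \<xi>) -` {0<..}"
  have "open V"
    unfolding V_def by (rule continuous_open_preimage) (auto intro!: continuous_intros cont)
  moreover have "V \<subseteq> - {0}" "\<kappa> \<in> V" using \<sigma> m \<kappa> by (auto simp: V_def)
  moreover have "m * norm \<xi> powr \<beta> \<le> \<sigma> * \<mu> \<xi>" if "\<xi> \<in> V" for \<xi>
  proof -
    have "\<sigma> * \<mu> \<xi> = \<bar>\<mu> \<xi>\<bar>"
      using that \<sigma>(1) by (auto simp: V_def abs_if zero_less_mult_iff)
    then show ?thesis using lower that by (auto simp: V_def)
  qed
  ultimately show ?thesis using that[OF \<kappa> \<sigma>(1) m _ _ _ _ \<sigma>(2)] by simp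
qed

lemma hessian_definite:
  fixes \<mu> :: "real^'n::finite \<Rightarrow> real"
  assumes beta: "1 < \<beta>" "\<beta> \<le> 2"
    and smooth: "smooth_on (- {0}) \<mu>"
    and homog: "\<And>t \<xi>. t > 0 \<Longrightarrow> \<xi> \<noteq> 0 \<Longrightarrow> \<mu> (t *\<^sub>R \<xi>) = t powr \<beta> * \<mu> \<xi>"
    and nonzero: "\<And>\<xi>. \<xi> \<noteq> 0 \<Longrightarrow> \<mu> \<xi> \<noteq> 0"
  obtains \<kappa> where "norm \<kappa> = 1"
    "(\<forall>v. v \<noteq> 0 \<longrightarrow> v \<bullet> (hessian \<mu> \<kappa> *v v) > 0) \<or> (\<forall>v. v \<noteq> 0 \<longrightarrow> v \<bullet> (hessian \<mu> \<kappa> *v v) < 0)"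
proof -
  have "continuous_on (- {0}) \<mu>"
    using continuous_on_dlist[OF smooth, of "[]"] by auto
  then obtain \<kappa> \<sigma> m V where \<kappa>: "norm \<kappa> = 1" and \<sigma>: "\<bar>\<sigma>\<bar> = 1" and m: "m > 0"
    and V: "open V" "V \<subseteq> - {0}" "\<kappa> \<in> V"
    and below: "\<And>\<xi>. \<xi> \<in> V \<Longrightarrow> m * norm \<xi> powr \<beta> \<le> \<sigma> * \<mu> \<xi>" and touch: "\<sigma> * \<mu> \<kappa> = m"
    using homogeneous_touching_power[OF _ homog nonzero] by blast
  have pos: "\<sigma> * (v \<bullet> (hessian \<mu> \<kappa> *v v)) > 0" if v: "v \<noteq> 0" for v
  proof -
    have "(\<kappa> \<bullet> v)^2 \<le> v \<bullet> v"
      using Cauchy_Schwarz_ineq[of \<kappa> v] \<kappa> power2_norm_eq_inner[of \<kappa>] by simp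
    then have "\<beta> * (\<beta> - 2) * (v \<bullet> v) \<le> \<beta> * (\<beta> - 2) * (\<kappa> \<bullet> v)^2"
      using beta by (intro mult_left_mono_neg) (auto intro: mult_nonneg_nonpos)
    then have "\<beta> * (\<beta> - 1) * (v \<bullet> v) \<le> \<beta> * (\<beta> - 2) * (\<kappa> \<bullet> v)^2 + \<beta> * (v \<bullet> v)"
      by (simp add: algebra_simps)
    moreover have "0 < \<beta> * (\<beta> - 1) * (v \<bullet> v)" using beta v by simp
    ultimately have "0 < m * (\<beta> * (\<beta> - 2) * (\<kappa> \<bullet> v)^2 + \<beta> * (v \<bullet> v))"
      using m by simp
    then show ?thesis using hessian_ge_touching_power[OF smooth V \<kappa> below touch, of v] by linarith
  qed
  consider "\<sigma> = 1" | "\<sigma> = -1" using \<sigma> by linarith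
  then show ?thesis
  proof cases
    case 1
    then show ?thesis using that[OF \<kappa>] pos by simp
  next
    case 2
    then show ?thesis using that[OF \<kappa>] pos by (simp add: neg_less_0_iff_less)
  qed
qed

lemma det_nonzero_if_definite:
  fixes H :: "real^'n::finite^'n"
  assumes "(\<forall>v. v \<noteq> 0 \<longrightarrow> v \<bullet> (H *v v) > 0) \<or> (\<forall>v. v \<noteq> 0 \<longrightarrow> v \<bullet> (H *v v) < 0)"
  shows "det H \<noteq> 0"
proof -
  have "inj (\<lambda>x. H *v x)"
  proof (rule injI, rule ccontr)
    fix x y assume "H *v x = H *v y" and "x \<noteq> y"
    then have "H *v (x - y) = 0" "x - y \<noteq> 0" by (simp_all add: matrix_vector_mult_diff_distrib)
    then show False using assms by (auto dest: spec[of _ "x - y"])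
  qed
  then show ?thesis using det_nz_iff_inj[of "\<lambda>x. H *v x"] by simp
qed

lemma cutoff_second_derivative_bounded:
  fixes \<mu> \<rho>0 :: "real^'n::finite \<Rightarrow> real"
  assumes beta: "\<beta> \<le> 2"
    and smooth: "smooth_on (- {0}) \<mu>"
    and homog: "\<And>t \<xi>. t > 0 \<Longrightarrow> \<xi> \<noteq> 0 \<Longrightarrow> \<mu> (t *\<^sub>R \<xi>) = t powr \<beta> * \<mu> \<xi>"
    and rho_smooth: "smooth_on UNIV \<rho>0"
    and rho_supp: "closure {x. \<rho>0 x \<noteq> 0} \<subseteq> ball 0 (1/2)"
    and rho_one: "\<And>x. x \<in> ball 0 (1/4) \<Longrightarrow> \<rho>0 x = 1"
  shows "smooth_on UNIV (\<lambda>x. (1 - \<rho>0 x) * dlist [i, j] \<mu> x)"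
    and "bounded_derivatives (\<lambda>x. (1 - \<rho>0 x) * dlist [i, j] \<mu> x)"
proof -
  have B: "\<exists>B. \<forall>z. norm z \<ge> 1/4 \<longrightarrow> \<bar>dlist is (dlist [i, j] \<mu>) z\<bar> \<le> B" for "is"
    using dlist_homogeneous_bounded[OF smooth homog, of "is @ [i, j]" "1/4"] beta
    by (simp add: dlist_append)
  have vanish: "1 - \<rho>0 z = 0" if "norm z < 1/4" for z
    using rho_one that by simp
  note cutoff = cutoff_mult_smooth_bounded[OF one_minus_bump_smooth_bounded[OF rho_smooth rho_supp]
      _ vanish smooth_on_dlist[OF smooth] B]
  show "smooth_on UNIV (\<lambda>x. (1 - \<rho>0 x) * dlist [i, j] \<mu> x)" by (rule cutoff(1)) simp
  show "bounded_derivatives (\<lambda>x. (1 - \<rho>0 x) * dlist [i, j] \<mu> x)" by (rule cutoff(2)) simp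
qed

theorem mainTheorem6:
  fixes \<mu> :: "real^'n::finite \<Rightarrow> real"
    and \<beta> :: real
    and \<rho>0 :: "real^'n \<Rightarrow> real"
    and \<phi> :: "real^'n \<Rightarrow> complex"
  assumes beta: "1 < \<beta>" "\<beta> \<le> 2"
    and smooth: "smooth_on (- {0}) \<mu>"
    and homog: "\<And>t \<xi>. t > 0 \<Longrightarrow> \<xi> \<noteq> 0 \<Longrightarrow> \<mu> (t *\<^sub>R \<xi>) = t powr \<beta> * \<mu> \<xi>"
    and nonzero: "\<And>\<xi>. \<xi> \<noteq> 0 \<Longrightarrow> \<mu> \<xi> \<noteq> 0"
    and rho_smooth: "smooth_on UNIV \<rho>0"
    and rho_supp: "closure {x. \<rho>0 x \<noteq> 0} \<subseteq> ball 0 (1/2)"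
    and rho_one: "\<And>x. x \<in> ball 0 (1/4) \<Longrightarrow> \<rho>0 x = 1"
    and window: "schwartz \<phi>" "\<phi> \<noteq> (\<lambda>_. 0)"
  shows "(\<forall>p q :: ereal. 0 < p \<longrightarrow> 0 < q \<longrightarrow>
            (\<exists>\<epsilon>>0. \<forall>i j.
               in_W_inf_inf \<phi> (real CARD('n) / dotmin p q + \<epsilon>)
                 (\<lambda>x. complex_of_real ((1 - \<rho>0 x) * dlist [i, j] \<mu> x))))
       \<and> (\<exists>\<kappa>0. norm \<kappa>0 = 1
            \<and> det (hessian \<mu> \<kappa>0) \<noteq> 0
            \<and> ((\<forall>v. v \<noteq> 0 \<longrightarrow> v \<bullet> (hessian \<mu> \<kappa>0 *v v) > 0)
               \<or> (\<forall>v. v \<noteq> 0 \<longrightarrow> v \<bullet> (hessian \<mu> \<kappa>0 *v v) < 0))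
            \<and> (\<exists>r0>0. \<forall>t\<ge>1. \<forall>\<xi>. \<xi> \<in> ball \<kappa>0 r0 \<and> norm \<xi> = 1 \<longrightarrow>
                  \<mu> (t *\<^sub>R \<xi>) = t powr \<beta> * \<mu> \<xi>))"
proof (intro conjI)
  note cutoff = cutoff_second_derivative_bounded[OF beta(2) smooth homog rho_smooth rho_supp rho_one]
  show "\<forall>p q :: ereal. 0 < p \<longrightarrow> 0 < q \<longrightarrow> (\<exists>\<epsilon>>0. \<forall>i j.
      in_W_inf_inf \<phi> (real CARD('n) / dotmin p q + \<epsilon>) (\<lambda>x. complex_of_real ((1 - \<rho>0 x) * dlist [i, j] \<mu> x)))"
    by (intro allI impI exI[of _ 1] conjI in_W_inf_inf_if_bounded_derivatives cutoff window(1)) simp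
next
  obtain \<kappa> where \<kappa>: "norm \<kappa> = 1" and definite:
    "(\<forall>v. v \<noteq> 0 \<longrightarrow> v \<bullet> (hessian \<mu> \<kappa> *v v) > 0) \<or> (\<forall>v. v \<noteq> 0 \<longrightarrow> v \<bullet> (hessian \<mu> \<kappa> *v v) < 0)"
    using hessian_definite[OF beta smooth homog nonzero] by blast
  have "\<mu> (t *\<^sub>R \<xi>) = t powr \<beta> * \<mu> \<xi>" if "t \<ge> 1" "norm \<xi> = 1" for t \<xi>
    using that by (intro homog) auto
  then show "\<exists>\<kappa>0. norm \<kappa>0 = 1 \<and> det (hessian \<mu> \<kappa>0) \<noteq> 0
      \<and> ((\<forall>v. v \<noteq> 0 \<longrightarrow> v \<bullet> (hessian \<mu> \<kappa>0 *v v) > 0) \<or> (\<forall>v. v \<noteq> 0 \<longrightarrow> v \<bullet> (hessian \<mu> \<kappa>0 *v v) < 0))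
      \<and> (\<exists>r0>0. \<forall>t\<ge>1. \<forall>\<xi>. \<xi> \<in> ball \<kappa>0 r0 \<and> norm \<xi> = 1 \<longrightarrow> \<mu> (t *\<^sub>R \<xi>) = t powr \<beta> * \<mu> \<xi>)"
    using \<kappa> definite det_nonzero_if_definite[OF definite]
    by (intro exI[of _ \<kappa>] conjI exI[of _ 1]) simp_all
qed

end
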